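(* In the setting of a mixture path $p_t(x^i|x_1^i)=(1-\kappa_t(x_1^i))p(x^i)+\kappa_t(x_1^i)\delta_{x_1^i}(x^i)$ on $\mathcal{T}$ with $\kappa_0\equiv0$, $\kappa_t(\cdot)\to1$ as $t\to1$, $\kappa_t$ nondecreasing and $\kappa_t(y)<1$ for $t<1$, conditional velocity $u_t(x^i,z^i|x_1^i)=\lambda_t(x_1^i)(\delta_{x_1^i}(x^i)-\delta_{z^i}(x^i))$ with $\lambda_t(y)=\frac{\dot\kappa_t(y)}{1-\kappa_t(y)}$, and model velocity $u^i_t(x^i,z)=\lambda_t(x^i)p^{\theta,i}_{1|t}(x^i|z)-\delta_{z^i}(x^i)\sum_{y}\lambda_t(y)p^{\theta,i}_{1|t}(y|z)$ for a strictly positive model posterior $p^{\theta,i}_{1|t}(\cdot|z)$ on $\mathcal{T}$, the model $p^\theta_1$ (CTMC from $\prod_ip(x^i)$ with this factorized velocity) satisfies $$\log p^\theta_1(x_1)\ge\int_0^1\mathbb{E}_{x_t\sim p_t(\cdot|x_1)}\sum_{i=1}^D\Big[\lambda_t(x_t^i)p^{\theta,i}_{1|t}(x_t^i|x_t)-\sum_{y^i}\lambda_t(y^i)p^{\theta,i}_{1|t}(y^i|x_t)+(1-\delta_{x_1^i}(x_t^i))\lambda_t(x_1^i)\big(1+\log p^{\theta,i}_{1|t}(x_1^i|x_t)\big)\Big]dt.$$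
   Context: $\mathcal{S}=\mathcal{T}^D$, $p_t(x|x_1)=\prod_ip_t(x^i|x_1^i)$, $\delta_y(x)=1$ if $x=y$ and $0$ otherwise. The factorized velocity on $\mathcal{S}$ is $u_t(x,z)=\sum_iu^i_t(x^i,z)\prod_{j\ne i}\delta_{z^j}(x^j)$. *)

theory Defs
  imports "HOL-Analysis.Analysis"
begin

text \<open>Token set T = type 'a (finite); dimension index set {1..D} = type 'i (finite);
  states of S = T^D are functions 'i => 'a.
  kappa t y is the scheduler kappa_t(y); dkappa t y its time derivative.
  q i t z y is the model posterior p^{theta,i}_{1|t}(y | z).\<close>

definition delta :: "'a \<Rightarrow> 'a \<Rightarrow> real" where
  "delta y x = (if x = y then 1 else 0)"

definition sched_rate :: "(real \<Rightarrow> 'a \<Rightarrow> real) \<Rightarrow> (real \<Rightarrow> 'a \<Rightarrow> real) \<Rightarrow> real \<Rightarrow> 'a \<Rightarrow> real" where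
  "sched_rate kappa dkappa t y = dkappa t y / (1 - kappa t y)"

definition model_vel_i :: "(real \<Rightarrow> 'a::finite \<Rightarrow> real) \<Rightarrow> ('i \<Rightarrow> real \<Rightarrow> ('i \<Rightarrow> 'a) \<Rightarrow> 'a \<Rightarrow> real)
    \<Rightarrow> 'i \<Rightarrow> real \<Rightarrow> 'a \<Rightarrow> ('i \<Rightarrow> 'a) \<Rightarrow> real" where
  "model_vel_i lam q i t xi z =
     lam t xi * q i t z xi - delta (z i) xi * (\<Sum>y\<in>UNIV. lam t y * q i t z y)"

text \<open>Factorized velocity on S: u_t(x,z) = sum_i u^i_t(x^i,z) prod_{j ~= i} delta_{z^j}(x^j)
  (rate of jumping from z to x).\<close>
definition fact_vel :: "('i::finite \<Rightarrow> real \<Rightarrow> 'a \<Rightarrow> ('i \<Rightarrow> 'a) \<Rightarrow> real)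
    \<Rightarrow> real \<Rightarrow> ('i \<Rightarrow> 'a) \<Rightarrow> ('i \<Rightarrow> 'a) \<Rightarrow> real" where
  "fact_vel ui t x z = (\<Sum>i\<in>UNIV. ui i t (x i) z * (\<Prod>j\<in>UNIV - {i}. delta (z j) (x j)))"

definition mix_path_i :: "('a \<Rightarrow> real) \<Rightarrow> (real \<Rightarrow> 'a \<Rightarrow> real) \<Rightarrow> real \<Rightarrow> 'a \<Rightarrow> 'a \<Rightarrow> real" where
  "mix_path_i p kappa t xi x1i = (1 - kappa t x1i) * p xi + kappa t x1i * delta x1i xi"

definition mix_path :: "('a \<Rightarrow> real) \<Rightarrow> (real \<Rightarrow> 'a \<Rightarrow> real) \<Rightarrow> real \<Rightarrow> ('i::finite \<Rightarrow> 'a) \<Rightarrow> ('i \<Rightarrow> 'a) \<Rightarrow> real" where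
  "mix_path p kappa t x x1 = (\<Prod>i\<in>UNIV. mix_path_i p kappa t (x i) (x1 i))"

text \<open>P is the marginal of the CTMC started at distribution p0 with velocity u on [0,1):
  it solves the Kolmogorov forward equation d/dt P_t(x) = sum_z u_t(x,z) P_t(z) on [0,1),
  P_0 = p0, and P_1 is the limit of P_t as t -> 1 from the left.\<close>
definition ctmc_marginal :: "(real \<Rightarrow> 's::finite \<Rightarrow> 's \<Rightarrow> real) \<Rightarrow> ('s \<Rightarrow> real) \<Rightarrow> (real \<Rightarrow> 's \<Rightarrow> real) \<Rightarrow> bool" where
  "ctmc_marginal u p0 P \<longleftrightarrow>
     (\<forall>x. P 0 x = p0 x) \<and>
     (\<forall>x. \<forall>t\<in>{0..<1}. ((\<lambda>s. P s x) has_real_derivative (\<Sum>z\<in>UNIV. u t x z * P t z)) (at t within {0..<1})) \<and>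
     (\<forall>x. ((\<lambda>t. P t x) \<longlongrightarrow> P 1 x) (at_left 1))"

definition elbo_integrand :: "('a::finite \<Rightarrow> real) \<Rightarrow> (real \<Rightarrow> 'a \<Rightarrow> real) \<Rightarrow> (real \<Rightarrow> 'a \<Rightarrow> real)
    \<Rightarrow> ('i::finite \<Rightarrow> real \<Rightarrow> ('i \<Rightarrow> 'a) \<Rightarrow> 'a \<Rightarrow> real) \<Rightarrow> ('i \<Rightarrow> 'a) \<Rightarrow> real \<Rightarrow> real" where
  "elbo_integrand p kappa dkappa q x1 t =
     (let lam = sched_rate kappa dkappa in
      \<Sum>x\<in>UNIV. mix_path p kappa t x x1 *
        (\<Sum>i\<in>UNIV. lam t (x i) * q i t x (x i) - (\<Sum>y\<in>UNIV. lam t y * q i t x y)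
                   + (1 - delta (x1 i) (x i)) * lam t (x1 i) * (1 + ln (q i t x (x1 i)))))"

end

theory Submission
  imports Defs
begin

text \<open>Write \<open>Q\<^sub>t = p\<^sub>t(\<cdot> | x\<^sub>1)\<close> and \<open>F(t) = \<Sum>\<^sub>x Q\<^sub>t(x) ln (P\<^sub>t(x) / Q\<^sub>t(x))\<close>, the negative
  KL divergence of \<open>P\<^sub>t\<close> from \<open>Q\<^sub>t\<close>. Both start at \<open>\<Prod>\<^sub>i p(x\<^sup>i)\<close>, so \<open>F(0) = 0\<close>.
  Differentiating \<open>F\<close> along the two forward equations and bounding, in each coordinate
  \<open>i\<close> with \<open>z\<^sup>i \<noteq> x\<^sub>1\<^sup>i\<close>, the model's inflow from below by \<open>exp a \<ge> 1 + a\<close> gives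
  \<open>F' \<ge>\<close> the ELBO integrand at all but finitely many times. Integrating and letting
  \<open>t \<rightarrow> 1\<close>, where \<open>Q\<^sub>t\<close> concentrates at \<open>x\<^sub>1\<close>, bounds the integral by \<open>ln P\<^sub>1(x\<^sub>1)\<close>.
  The logarithms stay finite because a comparison argument for the forward equation gives
  \<open>P\<^sub>t \<ge> c Q\<^sub>t\<close> on every \<open>[0, T]\<close> with \<open>T < 1\<close>.\<close>

lemma sum_fiber_fun_upd:
  fixes g :: "('i::finite \<Rightarrow> 'a::finite) \<Rightarrow> 'b::comm_monoid_add"
  shows "(\<Sum>z\<in>UNIV. g z) = (\<Sum>x\<in>{x. x i = c}. \<Sum>w\<in>UNIV. g (x(i:=w)))"
proof -
  have "(\<Sum>x\<in>{x. x i = c}. \<Sum>w\<in>UNIV. g (x(i:=w))) = (\<Sum>(x,w)\<in>{x. x i = c} \<times> UNIV. g (x(i:=w)))"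
    by (simp add: sum.cartesian_product)
  also have "\<dots> = (\<Sum>z\<in>UNIV. g z)"
    by (rule sum.reindex_bij_witness[where i="\<lambda>z. (z(i:=c), z i)" and j="\<lambda>(x,w). x(i:=w)"])
       (auto simp: fun_upd_idem)
  finally show ?thesis by simp
qed

lemma sum_fun_upd_swap:
  fixes G :: "('i::finite \<Rightarrow> 'a::finite) \<Rightarrow> 'a \<Rightarrow> 'b::comm_monoid_add"
  shows "(\<Sum>x\<in>UNIV. \<Sum>w\<in>UNIV. G (x(i:=w)) (x i)) = (\<Sum>z\<in>UNIV. \<Sum>y\<in>UNIV. G z y)"
proof -
  have "(\<Sum>x\<in>UNIV. \<Sum>w\<in>UNIV. G (x(i:=w)) (x i)) = (\<Sum>(x,w)\<in>UNIV \<times> UNIV. G (x(i:=w)) (x i))"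
    by (simp add: sum.cartesian_product)
  also have "\<dots> = (\<Sum>(z,y)\<in>UNIV \<times> UNIV. G z y)"
    by (rule sum.reindex_bij_witness[where i="\<lambda>(z,y). (z(i:=y), z i)" and j="\<lambda>(x,w). (x(i:=w), x i)"]) auto
  finally show ?thesis by (simp add: sum.cartesian_product)
qed

lemma sum_prod_delta_others:
  fixes h :: "('i::finite \<Rightarrow> 'a::finite) \<Rightarrow> real"
  shows "(\<Sum>z\<in>UNIV. (\<Prod>j\<in>UNIV - {i}. delta (z j) (x j)) * h z) = (\<Sum>w\<in>UNIV. h (x(i:=w)))"
proof -
  have indicator: "(\<Prod>j\<in>UNIV - {i}. delta (z j) (x j)) = (if z \<in> range (\<lambda>w. x(i:=w)) then 1 else 0)" for z
  proof (cases "z \<in> range (\<lambda>w. x(i:=w))")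
    case True
    then obtain w where "z = x(i:=w)" by auto
    then show ?thesis using True by (simp add: delta_def)
  next
    case False
    have "\<exists>j. j \<noteq> i \<and> z j \<noteq> x j"
    proof (rule ccontr)
      assume "\<not> ?thesis"
      then have "z = x(i := z i)" by (auto simp: fun_eq_iff)
      then show False using False by (metis rangeI)
    qed
    then obtain j where "j \<noteq> i" "z j \<noteq> x j" by blast
    then have "(\<Prod>j\<in>UNIV - {i}. delta (z j) (x j)) = 0"
      by (intro prod_zero bexI[of _ j]) (auto simp: delta_def)
    then show ?thesis using False by simp
  qed
  have "(\<Sum>z\<in>UNIV. (\<Prod>j\<in>UNIV - {i}. delta (z j) (x j)) * h z) = (\<Sum>z\<in>range (\<lambda>w. x(i:=w)). h z)"
    unfolding indicator by (simp add: sum.If_cases flip: of_bool_def)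
  also have "\<dots> = (\<Sum>w\<in>UNIV. h (x(i:=w)))"
    by (subst sum.reindex) (auto simp: inj_on_def fun_eq_iff)
  finally show ?thesis .
qed

lemma sum_UNIV_pair: "(\<Sum>j\<in>UNIV. f j) = (\<Sum>i\<in>UNIV. \<Sum>w\<in>UNIV. f (i, w))"
  by (simp add: sum.cartesian_product flip: UNIV_Times_UNIV)

lemma at_within_Ico_interior: "(t::real) \<in> {a<..<b} \<Longrightarrow> at t within {a..<b} = at t"
  by (rule at_within_interior) (simp add: interior_atLeastLessThan)

lemma deriv_nonneg_if_mono_on:
  fixes f :: "real \<Rightarrow> real"
  assumes mono: "mono_on {a..<b} f" and t: "t \<in> {a..<b}"
    and der: "(f has_real_derivative f') (at t within {a..<b})"
  shows "f' \<ge> 0"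
proof (rule ccontr)
  assume "\<not> f' \<ge> 0"
  then have "f' < 0" by simp
  then obtain d where d: "d > 0" "\<And>h. h > 0 \<Longrightarrow> t + h \<in> {a..<b} \<Longrightarrow> h < d \<Longrightarrow> f t > f (t + h)"
    using has_real_derivative_neg_dec_right[OF der] by blast
  define h where "h = min (d/2) ((b - t)/2)"
  have "h \<le> d/2" "h \<le> (b - t)/2" unfolding h_def by (rule min.cobounded1 min.cobounded2)+
  moreover have "h > 0" using t d(1) by (simp add: h_def)
  ultimately have h: "h > 0" "t + h \<in> {a..<b}" "h < d" using t d(1) by auto
  have "f t \<le> f (t + h)" using t h by (auto intro: mono_onD[OF mono])
  with d(2)[OF h] show False by simp
qed

lemma continuous_on_family_bounded:
  fixes f :: "'k::finite \<Rightarrow> real \<Rightarrow> real"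
  assumes cont: "\<And>k. continuous_on {a..b} (f k)"
  obtains B where "\<And>k t. t \<in> {a..b} \<Longrightarrow> \<bar>f k t\<bar> \<le> B"
proof -
  have "\<forall>k. \<exists>B. \<forall>t\<in>{a..b}. \<bar>f k t\<bar> \<le> B"
  proof
    fix k
    have "bounded (f k ` {a..b})" by (intro compact_imp_bounded compact_continuous_image cont) auto
    then show "\<exists>B. \<forall>t\<in>{a..b}. \<bar>f k t\<bar> \<le> B" by (auto simp: bounded_real)
  qed
  then obtain B where B: "\<And>k t. t \<in> {a..b} \<Longrightarrow> \<bar>f k t\<bar> \<le> B k" by metis
  show ?thesis
  proof (rule that)
    fix k t assume "t \<in> {a..b}"
    have "\<bar>f k t\<bar> \<le> \<bar>B k\<bar>" using B[OF \<open>t \<in> {a..b}\<close>, of k] by simp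
    also have "\<dots> \<le> (\<Sum>k\<in>UNIV. \<bar>B k\<bar>)" by (rule member_le_sum) auto
    finally show "\<bar>f k t\<bar> \<le> (\<Sum>k\<in>UNIV. \<bar>B k\<bar>)" .
  qed
qed

lemma continuous_on_family_pos_bound:
  fixes f :: "'k::finite \<Rightarrow> real \<Rightarrow> real"
  assumes cont: "\<And>k. continuous_on {a..b} (f k)"
    and pos: "\<And>k t. t \<in> {a..b} \<Longrightarrow> f k t > 0" and "a \<le> b"
  obtains c where "c > 0" "\<And>k t. t \<in> {a..b} \<Longrightarrow> c \<le> f k t"
proof -
  have "\<forall>k. \<exists>s. s \<in> {a..b} \<and> (\<forall>t\<in>{a..b}. f k s \<le> f k t)"
    using continuous_attains_inf[OF compact_Icc _ cont] \<open>a \<le> b\<close> by fastforce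
  then obtain s where s: "\<And>k. s k \<in> {a..b}" "\<And>k t. t \<in> {a..b} \<Longrightarrow> f k (s k) \<le> f k t" by metis
  define c where "c = Min (range (\<lambda>k. f k (s k)))"
  show ?thesis
  proof (rule that)
    show "c > 0" unfolding c_def using pos s(1) by (subst Min_gr_iff) auto
    fix k t assume "t \<in> {a..b}"
    have "c \<le> f k (s k)" unfolding c_def by (rule Min_le) auto
    also have "\<dots> \<le> f k t" using s(2)[OF \<open>t \<in> {a..b}\<close>] .
    finally show "c \<le> f k t" .
  qed
qed

lemma first_nonpos_time:
  fixes V :: "real \<Rightarrow> 's::finite \<Rightarrow> real"
  assumes cont: "\<And>x. continuous_on {0..T} (\<lambda>t. V t x)"
    and init: "\<And>x. V 0 x > 0"
    and hit: "t \<in> {0..T}" "V t x \<le> 0"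
  obtains t0 x0 where "t0 \<in> {0<..T}" "V t0 x0 \<le> 0" "\<And>x. V t0 x \<ge> 0"
    "\<And>s x. s \<in> {0..<t0} \<Longrightarrow> V s x > 0"
proof -
  define Z where "Z = {t\<in>{0..T}. \<exists>x. V t x \<le> 0}"
  have Zne: "Z \<noteq> {}" using hit by (auto simp: Z_def)
  have "Z = (\<Union>x. {t\<in>{0..T}. V t x \<le> 0})" by (auto simp: Z_def)
  moreover have "closed {t\<in>{0..T}. V t x \<le> 0}" for x
    using continuous_on_closed_Collect_le[OF cont continuous_on_const, of x 0] by simp
  ultimately have "closed Z" by (simp add: closed_UN)
  have bdd: "bdd_below Z" unfolding Z_def by (rule bdd_belowI[of _ 0]) auto
  have "Inf Z \<in> Z" using closed_contains_Inf[OF Zne bdd \<open>closed Z\<close>] .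
  then obtain x0 where t0: "Inf Z \<in> {0..T}" and x0: "V (Inf Z) x0 \<le> 0" unfolding Z_def by blast
  have before: "V s x > 0" if "s \<in> {0..<Inf Z}" for s x
  proof (rule ccontr)
    assume "\<not> V s x > 0"
    then have "V s x \<le> 0" by simp
    then have "s \<in> Z" using that t0 unfolding Z_def by auto
    then have "Inf Z \<le> s" by (rule cInf_lower[OF _ bdd])
    then show False using that by simp
  qed
  have "Inf Z \<noteq> 0" using x0 init[of x0] by (metis not_less)
  then have t0pos: "Inf Z \<in> {0<..T}" using t0 by auto
  have nonneg: "V (Inf Z) x \<ge> 0" for x
  proof (rule ccontr)
    assume neg: "\<not> V (Inf Z) x \<ge> 0"
    from cont[of x] t0 neg obtain d where d: "d > 0"
      "\<And>s. s \<in> {0..T} \<Longrightarrow> dist s (Inf Z) < d \<Longrightarrow> dist (V s x) (V (Inf Z) x) < - V (Inf Z) x"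
      unfolding continuous_on_iff by (metis neg_0_less_iff_less not_le)
    define s where "s = Inf Z - min (d/2) (Inf Z)"
    have s: "s \<in> {0..T}" "s \<in> {0..<Inf Z}" "dist s (Inf Z) < d"
      using t0pos d(1) by (auto simp: s_def dist_real_def)
    have "V s x < 0" using d(2)[OF s(1) s(3)] by (auto simp: dist_real_def)
    with before[OF s(2), of x] show False by simp
  qed
  show ?thesis
    by (rule that[of "Inf Z" x0]) (fact t0pos x0 nonneg before)+
qed

context
  fixes W dW e :: "real \<Rightarrow> 's::finite \<Rightarrow> real" and A :: "real \<Rightarrow> 's \<Rightarrow> 'j::finite \<Rightarrow> real"
    and \<sigma> :: "'s \<Rightarrow> 'j \<Rightarrow> 's" and T K :: real
  assumes der: "\<And>x t. t \<in> {0..T} \<Longrightarrow> ((\<lambda>s. W s x) has_real_derivative dW t x) (at t within {0..T})"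
    and diff_ineq: "\<And>x t. t \<in> {0..T} \<Longrightarrow> dW t x \<ge> (\<Sum>j\<in>UNIV. A t x j * W t (\<sigma> x j)) - e t x * W t x"
    and A_nonneg: "\<And>x j t. t \<in> {0..T} \<Longrightarrow> A t x j \<ge> 0"
    and A_bound: "\<And>x t. t \<in> {0..T} \<Longrightarrow> (\<Sum>j\<in>UNIV. A t x j) \<le> K"
    and e_nonneg: "\<And>x t. t \<in> {0..T} \<Longrightarrow> e t x \<ge> 0"
    and init: "\<And>x. W 0 x \<ge> 0"
begin

text \<open>Adding \<open>\<delta> e\<^sup>C\<^sup>t\<close> with \<open>C > K\<close> makes the inequality strict at a first zero.\<close>

lemma linear_differential_ineq_perturbed_pos:
  assumes \<delta>: "\<delta> > 0" and t: "t \<in> {0..T}"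
  shows "W t x + \<delta> * exp ((max K 0 + 1) * t) > 0"
proof (rule ccontr)
  define C where "C = max K 0 + 1"
  define V where "V t x = W t x + \<delta> * exp (C*t)" for t x
  assume "\<not> ?thesis"
  then have hit: "V t x \<le> 0" by (simp add: V_def C_def)
  have derV: "((\<lambda>s. V s x) has_real_derivative (dW t x + \<delta> * (C * exp (C*t)))) (at t within {0..T})"
    if "t \<in> {0..T}" for t x
    unfolding V_def using der[OF that] by (auto intro!: derivative_eq_intros)
  have contV: "continuous_on {0..T} (\<lambda>t. V t x)" for x
    using derV by (meson DERIV_continuous continuous_on_eq_continuous_within)
  have V0: "V 0 x > 0" for x using init[of x] \<delta> by (simp add: V_def add_nonneg_pos)
  obtain t0 x0 where t0: "t0 \<in> {0<..T}" and x0: "V t0 x0 \<le> 0" and Vt0: "\<And>x. V t0 x \<ge> 0"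
    and before: "\<And>s x. s \<in> {0..<t0} \<Longrightarrow> V s x > 0"
    using first_nonpos_time[where V=V, OF contV V0 t hit] by blast
  have t0T: "t0 \<in> {0..T}" using t0 by auto
  define E where "E = exp (C*t0)"
  have E: "E > 0" by (simp add: E_def)
  have "dW t0 x0 \<ge> (\<Sum>j\<in>UNIV. A t0 x0 j * W t0 (\<sigma> x0 j)) - e t0 x0 * W t0 x0"
    using diff_ineq t0T by blast
  also have "(\<Sum>j\<in>UNIV. A t0 x0 j * W t0 (\<sigma> x0 j))
      = (\<Sum>j\<in>UNIV. A t0 x0 j * V t0 (\<sigma> x0 j)) - \<delta> * E * (\<Sum>j\<in>UNIV. A t0 x0 j)"
    by (simp add: V_def E_def algebra_simps sum_subtractf sum_distrib_left sum_distrib_right sum.distrib)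
  also have "e t0 x0 * W t0 x0 = e t0 x0 * V t0 x0 - e t0 x0 * \<delta> * E"
    by (simp add: V_def E_def algebra_simps)
  finally have dW: "dW t0 x0 \<ge> (\<Sum>j\<in>UNIV. A t0 x0 j * V t0 (\<sigma> x0 j)) - \<delta> * E * (\<Sum>j\<in>UNIV. A t0 x0 j)
      - (e t0 x0 * V t0 x0 - e t0 x0 * \<delta> * E)" .
  have "(\<Sum>j\<in>UNIV. A t0 x0 j * V t0 (\<sigma> x0 j)) \<ge> 0"
    using A_nonneg t0T Vt0 by (intro sum_nonneg mult_nonneg_nonneg) auto
  moreover have "e t0 x0 * V t0 x0 \<le> 0" using e_nonneg[OF t0T] x0 by (simp add: mult_nonneg_nonpos)
  moreover have "e t0 x0 * \<delta> * E \<ge> 0" using e_nonneg[OF t0T] \<delta> E by simp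
  moreover have "\<delta> * E * (\<Sum>j\<in>UNIV. A t0 x0 j) \<le> \<delta> * E * (C - 1)"
    using A_bound[OF t0T, of x0] \<delta> E unfolding C_def by (intro mult_left_mono) auto
  moreover have "\<delta> * (C * E) - \<delta> * E * (C - 1) = \<delta> * E" by (simp add: algebra_simps)
  moreover have "\<delta> * E > 0" using \<delta> E by simp
  ultimately have "dW t0 x0 + \<delta> * (C * E) > 0" using dW by linarith
  then obtain d where d: "d > 0" "\<And>h. h > 0 \<Longrightarrow> t0 - h \<in> {0..T} \<Longrightarrow> h < d \<Longrightarrow> V (t0 - h) x0 < V t0 x0"
    using has_real_derivative_pos_inc_left[OF derV[OF t0T, of x0]] unfolding E_def by blast
  define h where "h = min (d/2) t0"
  have h: "h > 0" "t0 - h \<in> {0..T}" "h < d" using d(1) t0 by (auto simp: h_def)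
  have "V (t0 - h) x0 < 0" using d(2)[OF h] x0 by simp
  moreover have "V (t0 - h) x0 > 0" using before h(1) h(2) by simp
  ultimately show False by simp
qed

lemma linear_differential_ineq_nonneg:
  assumes t: "t \<in> {0..T}"
  shows "W t x \<ge> 0"
proof (rule ccontr)
  define C where "C = max K 0 + 1"
  assume neg: "\<not> W t x \<ge> 0"
  define \<delta> where "\<delta> = - W t x / (2 * exp (C*t))"
  have "\<delta> > 0" using neg by (simp add: \<delta>_def divide_neg_pos)
  from linear_differential_ineq_perturbed_pos[OF this t, of x]
  have "W t x + \<delta> * exp (C*t) > 0" by (simp add: C_def)
  moreover have "\<delta> * exp (C*t) = - W t x / 2" by (simp add: \<delta>_def)
  ultimately show False using neg by simp
qed

end

lemma tendsto_x_ln_x_at_right_0: "((\<lambda>u::real. u * ln u) \<longlongrightarrow> 0) (at_right 0)"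
proof -
  have "((\<lambda>u. ln (inverse u) / inverse u) \<longlongrightarrow> (0::real)) (at_right 0)"
    by (rule filterlim_compose[OF ln_x_over_x_tendsto_0 filterlim_inverse_at_top_right])
  then have "((\<lambda>u. - (ln (inverse u) / inverse u)) \<longlongrightarrow> (0::real)) (at_right 0)"
    using tendsto_minus by fastforce
  moreover have "\<forall>\<^sub>F u in at_right 0. - (ln (inverse u) / inverse u) = u * ln (u::real)"
    using eventually_at_right_less[of "0::real"]
    by eventually_elim (simp add: ln_inverse divide_inverse mult.commute)
  ultimately show ?thesis by (rule Lim_transform_eventually)
qed

lemma continuous_on_x_ln_x: "continuous_on {0..} (\<lambda>u::real. u * ln u)"
proof (rule continuous_on_eq_continuous_within[THEN iffD2], rule ballI)
  fix u :: real assume u: "u \<in> {0..}"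
  show "continuous (at u within {0..}) (\<lambda>u::real. u * ln u)"
  proof (cases "u = 0")
    case True
    then show ?thesis
      using tendsto_x_ln_x_at_right_0 by (simp add: continuous_within at_within_Ici_at_right)
  next
    case False
    then have "u > 0" using u by simp
    then have "isCont ln u" by (rule DERIV_isCont[OF DERIV_ln])
    then show ?thesis by (rule continuous_at_imp_continuous_within[OF continuous_mult[OF continuous_ident]])
  qed
qed

lemma tendsto_integral_upto_at_left:
  fixes f :: "real \<Rightarrow> real"
  assumes "f integrable_on {a..b}" and "a < b"
  shows "((\<lambda>s. integral {a..s} f) \<longlongrightarrow> integral {a..b} f) (at_left b)"
proof -
  have "continuous_on {a..b} (\<lambda>s. integral {a..s} f)"
    by (rule indefinite_integral_continuous_1[OF assms(1)])
  then have "((\<lambda>s. integral {a..s} f) \<longlongrightarrow> integral {a..b} f) (at b within {a..b})"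
    using assms(2) by (simp add: continuous_on_def)
  then show ?thesis using assms(2) by (simp add: at_within_Icc_at_left)
qed

locale elbo_setting =
  fixes p :: "'a::finite \<Rightarrow> real"
    and kappa dkappa :: "real \<Rightarrow> 'a \<Rightarrow> real"
    and q :: "'i::finite \<Rightarrow> real \<Rightarrow> ('i \<Rightarrow> 'a) \<Rightarrow> 'a \<Rightarrow> real"
    and P :: "real \<Rightarrow> ('i \<Rightarrow> 'a) \<Rightarrow> real"
    and x1 :: "'i \<Rightarrow> 'a"
  assumes p_nonneg: "\<And>y. p y \<ge> 0"
    and p_sum: "(\<Sum>y\<in>UNIV. p y) = 1"
    and kappa0: "\<And>y. kappa 0 y = 0"
    and kappa_lim: "\<And>y. ((\<lambda>t. kappa t y) \<longlongrightarrow> 1) (at_left 1)"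
    and kappa_mono: "\<And>y. mono_on {0..<1} (\<lambda>t. kappa t y)"
    and kappa_lt1: "\<And>y t. t \<in> {0..<1} \<Longrightarrow> kappa t y < 1"
    and kappa_deriv: "\<And>y t. t \<in> {0..<1} \<Longrightarrow>
           ((\<lambda>s. kappa s y) has_real_derivative dkappa t y) (at t within {0..<1})"
    and dkappa_cont: "\<And>y. continuous_on {0..<1} (\<lambda>t. dkappa t y)"
    and q_pos: "\<And>i t z y. t \<in> {0..<1} \<Longrightarrow> q i t z y > 0"
    and q_cont: "\<And>i z y. continuous_on {0..<1} (\<lambda>t. q i t z y)"
    and P_ctmc: "ctmc_marginal
                   (fact_vel (model_vel_i (sched_rate kappa dkappa) q))
                   (\<lambda>x. \<Prod>i\<in>UNIV. p (x i)) P"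
begin

abbreviation lam :: "real \<Rightarrow> 'a \<Rightarrow> real" where "lam \<equiv> sched_rate kappa dkappa"

abbreviation elbo :: "real \<Rightarrow> real" where "elbo \<equiv> elbo_integrand p kappa dkappa q x1"

lemma kappa_cont: "continuous_on {0..<1} (\<lambda>t. kappa t y)"
  using kappa_deriv by (rule DERIV_continuous_on)

lemma kappa_nonneg: "t \<in> {0..<1} \<Longrightarrow> kappa t y \<ge> 0"
  using mono_onD[OF kappa_mono, of 0 t y] kappa0[of y] by simp

lemma dkappa_nonneg: "t \<in> {0..<1} \<Longrightarrow> dkappa t y \<ge> 0"
  using deriv_nonneg_if_mono_on[OF kappa_mono _ kappa_deriv] .

text \<open>A zero of \<open>\<kappa>\<close> inside \<open>(0,1)\<close> is an interior minimum.\<close>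

lemma dkappa_eq_0_if_kappa_eq_0:
  assumes t: "t \<in> {0<..<1}" and k0: "kappa t y = 0"
  shows "dkappa t y = 0"
proof (rule DERIV_local_min)
  show "((\<lambda>s. kappa s y) has_real_derivative dkappa t y) (at t)"
    using kappa_deriv[of t y] t by (simp add: at_within_Ico_interior)
  show "min t (1 - t) > 0" using t by simp
  show "\<forall>s. \<bar>t - s\<bar> < min t (1 - t) \<longrightarrow> kappa t y \<le> kappa s y"
    using k0 kappa_nonneg by (auto simp: abs_if split: if_splits)
qed

lemma lam_nonneg: "t \<in> {0..<1} \<Longrightarrow> lam t y \<ge> 0"
  using dkappa_nonneg[of t y] kappa_lt1[of t y] by (simp add: sched_rate_def)

lemma dkappa_le_lam: assumes t: "t \<in> {0..<1}" shows "dkappa t y \<le> lam t y"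
proof -
  have "0 < 1 - kappa t y" "1 - kappa t y \<le> 1" using kappa_lt1[OF t] kappa_nonneg[OF t] by auto
  moreover have "dkappa t y * (1 - kappa t y) \<le> dkappa t y"
    using dkappa_nonneg[OF t] calculation by (simp add: mult_left_le)
  ultimately show ?thesis by (simp add: sched_rate_def le_divide_eq)
qed

lemma continuous_on_lam: "continuous_on {0..<1} (\<lambda>t. lam t y)"
proof -
  have "\<forall>t\<in>{0..<1}. 1 - kappa t y \<noteq> 0" using kappa_lt1 by (simp add: less_imp_neq)
  then show ?thesis unfolding sched_rate_def
    by (rule continuous_on_divide[OF dkappa_cont continuous_on_diff[OF continuous_on_const kappa_cont]])
qed

lemma lam_mult_one_minus_kappa: "t \<in> {0..<1} \<Longrightarrow> lam t y * (1 - kappa t y) = dkappa t y"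
  using kappa_lt1[of t y] by (simp add: sched_rate_def)

definition jump_rate where "jump_rate i t z y = lam t y * q i t z y"
definition exit_rate where "exit_rate i t z = (\<Sum>y\<in>UNIV. jump_rate i t z y)"

lemma jump_rate_nonneg: "t \<in> {0..<1} \<Longrightarrow> jump_rate i t z y \<ge> 0"
  using lam_nonneg q_pos[of t] by (simp add: jump_rate_def less_imp_le)

lemma exit_rate_nonneg: "t \<in> {0..<1} \<Longrightarrow> exit_rate i t z \<ge> 0"
  unfolding exit_rate_def by (intro sum_nonneg jump_rate_nonneg)

lemma continuous_on_jump_rate: "continuous_on {0..<1} (\<lambda>t. jump_rate i t z y)"
  unfolding jump_rate_def by (intro continuous_on_mult continuous_on_lam q_cont)

subsection \<open>The conditional path\<close>

definition cpath_i where "cpath_i i t y = mix_path_i p kappa t y (x1 i)"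
definition cpath where "cpath t x = mix_path p kappa t x x1"
definition cpath_others where "cpath_others i t x = (\<Prod>j\<in>UNIV - {i}. cpath_i j t (x j))"
definition cpath_i_deriv where "cpath_i_deriv i t y = dkappa t (x1 i) * (delta (x1 i) y - p y)"
definition cpath_deriv where "cpath_deriv t x = (\<Sum>i\<in>UNIV. cpath_i_deriv i t (x i) * cpath_others i t x)"

lemma cpath_i_nonneg: assumes t: "t \<in> {0..<1}" shows "cpath_i i t y \<ge> 0"
proof -
  have "0 \<le> 1 - kappa t (x1 i)" "0 \<le> kappa t (x1 i)"
    using kappa_lt1[OF t] kappa_nonneg[OF t] by (auto simp: less_imp_le)
  then show ?thesis unfolding cpath_i_def mix_path_i_def
    by (intro add_nonneg_nonneg mult_nonneg_nonneg p_nonneg) (simp_all add: delta_def)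
qed

lemma sum_cpath_i: "(\<Sum>y\<in>UNIV. cpath_i i t y) = 1"
proof -
  have "(\<Sum>y\<in>UNIV. cpath_i i t y)
      = (1 - kappa t (x1 i)) * (\<Sum>y\<in>UNIV. p y) + kappa t (x1 i) * (\<Sum>y\<in>UNIV. delta (x1 i) y)"
    by (simp add: cpath_i_def mix_path_i_def sum.distrib sum_distrib_left)
  then show ?thesis by (simp add: p_sum delta_def)
qed

lemma cpath_eq_prod: "cpath t x = (\<Prod>i\<in>UNIV. cpath_i i t (x i))"
  by (simp add: cpath_def mix_path_def cpath_i_def)

lemma cpath_split: "cpath t x = cpath_i i t (x i) * cpath_others i t x"
  unfolding cpath_eq_prod cpath_others_def by (subst prod.remove[of _ i]) auto

lemma cpath_nonneg: "t \<in> {0..<1} \<Longrightarrow> cpath t x \<ge> 0"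
  unfolding cpath_eq_prod by (intro prod_nonneg cpath_i_nonneg) auto

lemma cpath_others_nonneg: "t \<in> {0..<1} \<Longrightarrow> cpath_others i t x \<ge> 0"
  unfolding cpath_others_def by (intro prod_nonneg cpath_i_nonneg) auto

lemma cpath_others_fun_upd: "cpath_others i t (x(i:=w)) = cpath_others i t x"
  unfolding cpath_others_def by (intro prod.cong) auto

lemma sum_cpath_fun_upd: "(\<Sum>w\<in>UNIV. cpath t (x(i:=w))) = cpath_others i t x"
  unfolding cpath_split[of t _ i] cpath_others_fun_upd
  by (simp add: sum_distrib_right[symmetric] sum_cpath_i)

lemma cpath_i_has_deriv: "t \<in> {0..<1} \<Longrightarrow>
    ((\<lambda>s. cpath_i i s y) has_real_derivative cpath_i_deriv i t y) (at t within {0..<1})"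
  unfolding cpath_i_def mix_path_i_def cpath_i_deriv_def
  by (auto intro!: derivative_eq_intros kappa_deriv simp: algebra_simps)

lemma cpath_has_deriv: assumes t: "t \<in> {0..<1}"
  shows "((\<lambda>s. cpath s x) has_real_derivative cpath_deriv t x) (at t within {0..<1})"
proof -
  have "((\<lambda>s. \<Prod>i\<in>UNIV. cpath_i i s (x i)) has_derivative
      (\<lambda>h. \<Sum>i\<in>UNIV. (cpath_i_deriv i t (x i) * h) * (\<Prod>j\<in>UNIV - {i}. cpath_i j t (x j))))
      (at t within {0..<1})"
    using cpath_i_has_deriv[OF t] by (intro has_derivative_prod) (simp add: has_field_derivative_def)
  moreover have "(\<lambda>h. \<Sum>i\<in>UNIV. (cpath_i_deriv i t (x i) * h) * (\<Prod>j\<in>UNIV - {i}. cpath_i j t (x j)))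
      = (\<lambda>h. cpath_deriv t x * h)"
    by (auto simp: cpath_deriv_def cpath_others_def sum_distrib_left mult_ac)
  ultimately show ?thesis unfolding has_field_derivative_def cpath_eq_prod by simp
qed

text \<open>The forward equation of \<open>Q\<close> for the paper's conditional velocity
  \<open>\<lambda>\<^sub>t(x\<^sub>1\<^sup>i) (\<delta>\<^bsub>x\<^sub>1\<^sup>i\<^esub> - \<delta>\<^bsub>z\<^sup>i\<^esub>)\<close>.\<close>

lemma cpath_deriv_eq: assumes t: "t \<in> {0..<1}"
  shows "cpath_deriv t x = (\<Sum>i\<in>UNIV. lam t (x1 i) * (delta (x1 i) (x i) * cpath_others i t x - cpath t x))"
  unfolding cpath_deriv_def
proof (rule sum.cong[OF refl])
  fix i
  have "lam t (x1 i) * (delta (x1 i) (x i) * cpath_others i t x - cpath t x)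
      = lam t (x1 i) * (delta (x1 i) (x i) - cpath_i i t (x i)) * cpath_others i t x"
    by (simp add: cpath_split[of t x i] algebra_simps)
  also have "delta (x1 i) (x i) - cpath_i i t (x i) = (1 - kappa t (x1 i)) * (delta (x1 i) (x i) - p (x i))"
    by (simp add: cpath_i_def mix_path_i_def delta_def algebra_simps)
  also have "lam t (x1 i) * ((1 - kappa t (x1 i)) * (delta (x1 i) (x i) - p (x i))) * cpath_others i t x
      = (lam t (x1 i) * (1 - kappa t (x1 i))) * (delta (x1 i) (x i) - p (x i)) * cpath_others i t x"
    by (simp add: algebra_simps)
  also have "\<dots> = cpath_i_deriv i t (x i) * cpath_others i t x"
    using lam_mult_one_minus_kappa[OF t] by (simp add: cpath_i_deriv_def)
  finally show "cpath_i_deriv i t (x i) * cpath_others i t x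
      = lam t (x1 i) * (delta (x1 i) (x i) * cpath_others i t x - cpath t x)" by simp
qed

lemma cpath_i_tendsto: "((\<lambda>t. cpath_i i t y) \<longlongrightarrow> delta (x1 i) y) (at_left 1)"
proof -
  have "((\<lambda>t. (1 - kappa t (x1 i)) * p y + kappa t (x1 i) * delta (x1 i) y)
      \<longlongrightarrow> (1 - 1) * p y + 1 * delta (x1 i) y) (at_left 1)"
    by (intro tendsto_intros kappa_lim)
  then show ?thesis by (simp add: cpath_i_def mix_path_i_def)
qed

lemma cpath_tendsto: "((\<lambda>t. cpath t x) \<longlongrightarrow> (if x = x1 then 1 else 0)) (at_left 1)"
proof -
  have "((\<lambda>t. \<Prod>i\<in>UNIV. cpath_i i t (x i)) \<longlongrightarrow> (\<Prod>i\<in>UNIV. delta (x1 i) (x i))) (at_left 1)"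
    by (intro tendsto_prod cpath_i_tendsto)
  moreover have "(\<Prod>i\<in>UNIV. delta (x1 i) (x i)) = (if x = x1 then 1 else 0)"
  proof (cases "x = x1")
    case False
    then obtain i where "x i \<noteq> x1 i" by auto
    then show ?thesis using False by (intro trans[OF prod_zero]) (auto simp: delta_def)
  qed (simp add: delta_def)
  ultimately show ?thesis by (simp add: cpath_eq_prod)
qed

lemma continuous_on_cpath: "continuous_on {0..<1} (\<lambda>s. cpath s x)"
  using cpath_has_deriv by (rule DERIV_continuous_on)

subsection \<open>The forward equation of the model\<close>

definition forward_rhs where
  "forward_rhs t x = (\<Sum>i\<in>UNIV. (\<Sum>w\<in>UNIV. jump_rate i t (x(i:=w)) (x i) * P t (x(i:=w)))
                                 - exit_rate i t x * P t x)"

lemma P_initial: "P 0 x = (\<Prod>i\<in>UNIV. p (x i))"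
  using P_ctmc by (simp add: ctmc_marginal_def)

lemma P_tendsto_P1: "((\<lambda>t. P t x) \<longlongrightarrow> P 1 x) (at_left 1)"
  using P_ctmc by (simp add: ctmc_marginal_def)

lemma sum_fact_vel_eq_forward_rhs:
  "(\<Sum>z\<in>UNIV. fact_vel (model_vel_i lam q) t x z * P t z) = forward_rhs t x"
proof -
  have "(\<Sum>z\<in>UNIV. fact_vel (model_vel_i lam q) t x z * P t z)
     = (\<Sum>i\<in>UNIV. \<Sum>z\<in>UNIV. (\<Prod>j\<in>UNIV - {i}. delta (z j) (x j)) *
          (model_vel_i lam q i t (x i) z * P t z))"
    unfolding fact_vel_def sum_distrib_right by (subst sum.swap) (simp add: algebra_simps)
  also have "\<dots> = (\<Sum>i\<in>UNIV. \<Sum>w\<in>UNIV. model_vel_i lam q i t (x i) (x(i:=w)) * P t (x(i:=w)))"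
    by (subst sum_prod_delta_others) simp
  also have "\<dots> = forward_rhs t x"
    unfolding forward_rhs_def
  proof (rule sum.cong[OF refl])
    fix i
    have "(\<Sum>w\<in>UNIV. delta w (x i) * (exit_rate i t (x(i:=w)) * P t (x(i:=w))))
        = (\<Sum>w\<in>UNIV. if w = x i then exit_rate i t (x(i:=w)) * P t (x(i:=w)) else 0)"
      by (intro sum.cong) (auto simp: delta_def)
    then show "(\<Sum>w\<in>UNIV. model_vel_i lam q i t (x i) (x(i:=w)) * P t (x(i:=w)))
      = (\<Sum>w\<in>UNIV. jump_rate i t (x(i:=w)) (x i) * P t (x(i:=w))) - exit_rate i t x * P t x"
      by (simp add: model_vel_i_def jump_rate_def exit_rate_def sum_subtractf algebra_simps)
  qed
  finally show ?thesis .
qed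

lemma P_has_deriv:
  "t \<in> {0..<1} \<Longrightarrow> ((\<lambda>s. P s x) has_real_derivative forward_rhs t x) (at t within {0..<1})"
  using P_ctmc sum_fact_vel_eq_forward_rhs by (simp add: ctmc_marginal_def)

lemma continuous_on_P: "continuous_on {0..<1} (\<lambda>s. P s x)"
  using P_has_deriv by (rule DERIV_continuous_on)

lemma forward_rhs_pairs:
  "forward_rhs t x = (\<Sum>j\<in>UNIV. (case j of (i,w) \<Rightarrow> jump_rate i t (x(i:=w)) (x i))
                                  * P t (case j of (i,w) \<Rightarrow> x(i:=w)))
                     - (\<Sum>i\<in>UNIV. exit_rate i t x) * P t x"
  unfolding forward_rhs_def sum_subtractf sum_distrib_right sum_UNIV_pair by simp

subsection \<open>A lower bound for the model marginal\<close>

text \<open>For \<open>0 \<le> c \<le> q\<close> and \<open>K\<close> bounding the exit rates, \<open>exp (-K t) \<cdot> subsol c t\<close> is a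
  subsolution of the forward equation of \<open>P\<close> with the same initial value, and it
  dominates a multiple of \<open>Q\<^sub>t\<close>.\<close>

definition subsol_i where "subsol_i c i t y = p y + delta (x1 i) y * c * kappa t (x1 i)"
definition subsol where "subsol c t x = (\<Prod>i\<in>UNIV. subsol_i c i t (x i))"
definition subsol_others where "subsol_others c i t x = (\<Prod>j\<in>UNIV - {i}. subsol_i c j t (x j))"
definition subsol_deriv where
  "subsol_deriv c t x = (\<Sum>i\<in>UNIV. (delta (x1 i) (x i) * c * dkappa t (x1 i)) * subsol_others c i t x)"

lemma subsol_i_nonneg: "t \<in> {0..<1} \<Longrightarrow> c \<ge> 0 \<Longrightarrow> subsol_i c i t y \<ge> 0"
  unfolding subsol_i_def using p_nonneg[of y] kappa_nonneg[of t "x1 i"]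
  by (intro add_nonneg_nonneg mult_nonneg_nonneg) (auto simp: delta_def)

lemma subsol_split: "subsol c t x = subsol_i c i t (x i) * subsol_others c i t x"
  unfolding subsol_def subsol_others_def by (subst prod.remove[of _ i]) auto

lemma subsol_others_fun_upd: "subsol_others c i t (x(i:=w)) = subsol_others c i t x"
  unfolding subsol_others_def by (intro prod.cong) auto

lemma subsol_others_nonneg: "t \<in> {0..<1} \<Longrightarrow> c \<ge> 0 \<Longrightarrow> subsol_others c i t x \<ge> 0"
  unfolding subsol_others_def by (intro prod_nonneg subsol_i_nonneg) auto

lemma subsol_nonneg: "t \<in> {0..<1} \<Longrightarrow> c \<ge> 0 \<Longrightarrow> subsol c t x \<ge> 0"
  unfolding subsol_def by (intro prod_nonneg subsol_i_nonneg) auto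

lemma subsol_has_deriv: assumes t: "t \<in> {0..<1}"
  shows "((\<lambda>s. subsol c s x) has_real_derivative subsol_deriv c t x) (at t within {0..<1})"
proof -
  have "((\<lambda>s. subsol_i c i s y) has_real_derivative (delta (x1 i) y * c * dkappa t (x1 i)))
      (at t within {0..<1})" for i y
    unfolding subsol_i_def by (auto intro!: derivative_eq_intros kappa_deriv[OF t] simp: algebra_simps)
  then have "((\<lambda>s. \<Prod>i\<in>UNIV. subsol_i c i s (x i)) has_derivative
      (\<lambda>h. \<Sum>i\<in>UNIV. ((delta (x1 i) (x i) * c * dkappa t (x1 i)) * h) * (\<Prod>j\<in>UNIV - {i}. subsol_i c j t (x j))))
      (at t within {0..<1})"
    by (intro has_derivative_prod) (simp add: has_field_derivative_def)
  moreover have "(\<lambda>h. \<Sum>i\<in>UNIV. ((delta (x1 i) (x i) * c * dkappa t (x1 i)) * h) * (\<Prod>j\<in>UNIV - {i}. subsol_i c j t (x j)))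
      = (\<lambda>h. subsol_deriv c t x * h)"
    by (auto simp: subsol_deriv_def subsol_others_def sum_distrib_left mult_ac)
  ultimately show ?thesis unfolding has_field_derivative_def subsol_def by simp
qed

lemma sum_subsol_i_ge_1: assumes t: "t \<in> {0..<1}" and c: "c \<ge> 0"
  shows "(\<Sum>w\<in>UNIV. subsol_i c i t w) \<ge> 1"
proof -
  have "(\<Sum>w\<in>UNIV. p w) \<le> (\<Sum>w\<in>UNIV. subsol_i c i t w)"
    unfolding subsol_i_def using kappa_nonneg[OF t, of "x1 i"] c
    by (intro sum_mono) (auto simp: delta_def)
  then show ?thesis using p_sum by simp
qed

text \<open>Since \<open>q \<ge> c\<close> and \<open>\<Sum>\<^sub>w subsol_i c i t w \<ge> 1\<close>, the inflow through coordinate \<open>i\<close>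
  is at least \<open>c \<lambda>\<^sub>t(x\<^sub>1\<^sup>i) \<ge> c \<kappa>'\<^sub>t(x\<^sub>1\<^sup>i)\<close> times the other factors.\<close>

lemma subsol_deriv_le:
  assumes t: "t \<in> {0..<1}" and c: "c \<ge> 0" and cq: "\<And>i z y. c \<le> q i t z y"
  shows "subsol_deriv c t x \<le> (\<Sum>i\<in>UNIV. \<Sum>w\<in>UNIV. jump_rate i t (x(i:=w)) (x i) * subsol c t (x(i:=w)))"
  unfolding subsol_deriv_def
proof (rule sum_mono)
  fix i
  have nn: "\<And>w. jump_rate i t (x(i:=w)) (x i) * subsol c t (x(i:=w)) \<ge> 0"
    using jump_rate_nonneg[OF t] subsol_nonneg[OF t c] by simp
  show "delta (x1 i) (x i) * c * dkappa t (x1 i) * subsol_others c i t x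
      \<le> (\<Sum>w\<in>UNIV. jump_rate i t (x(i:=w)) (x i) * subsol c t (x(i:=w)))"
  proof (cases "x i = x1 i")
    case False
    then show ?thesis using nn by (simp add: delta_def sum_nonneg)
  next
    case True
    define L where "L = lam t (x1 i) * subsol_others c i t x"
    have L: "L \<ge> 0" unfolding L_def using lam_nonneg[OF t] subsol_others_nonneg[OF t c] by simp
    have "delta (x1 i) (x i) * c * dkappa t (x1 i) * subsol_others c i t x \<le> L * c"
      using True dkappa_le_lam[OF t, of "x1 i"] c subsol_others_nonneg[OF t c, of i x]
      by (simp add: L_def delta_def mult_right_mono mult_left_mono mult_ac)
    also have "\<dots> \<le> L * (\<Sum>w\<in>UNIV. c * subsol_i c i t w)"
      using sum_subsol_i_ge_1[OF t c, of i] c L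
      by (intro mult_left_mono) (simp_all add: sum_distrib_left[symmetric] mult_le_cancel_left1)
    also have "\<dots> \<le> L * (\<Sum>w\<in>UNIV. q i t (x(i:=w)) (x1 i) * subsol_i c i t w)"
      using L cq subsol_i_nonneg[OF t c] by (intro mult_left_mono sum_mono mult_right_mono) auto
    also have "\<dots> = (\<Sum>w\<in>UNIV. jump_rate i t (x(i:=w)) (x i) * subsol c t (x(i:=w)))"
      unfolding sum_distrib_left
      by (intro sum.cong refl)
         (simp add: True L_def jump_rate_def subsol_split[of c t _ i] subsol_others_fun_upd)
    finally show ?thesis .
  qed
qed

lemma rates_uniform_bounds:
  assumes T: "0 \<le> T" "T < 1"
  obtains B c where "B \<ge> 0" "c > 0" "c \<le> 1"
    "\<And>t i z y. t \<in> {0..T} \<Longrightarrow> jump_rate i t z y \<le> B"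
    "\<And>t i z y. t \<in> {0..T} \<Longrightarrow> c \<le> q i t z y"
proof -
  have subs: "{0..T} \<subseteq> {0..<1}" using T by auto
  obtain B where B: "\<And>k t. t \<in> {0..T} \<Longrightarrow> \<bar>(case k of (i, z, y) \<Rightarrow> jump_rate i t z y)\<bar> \<le> B"
  proof (rule continuous_on_family_bounded[where f="\<lambda>k t. case k of (i, z, y) \<Rightarrow> jump_rate i t z y"])
    fix k :: "'i \<times> ('i \<Rightarrow> 'a) \<times> 'a"
    obtain i z y where "k = (i, z, y)" by (cases k) auto
    then show "continuous_on {0..T} (\<lambda>t. case k of (i, z, y) \<Rightarrow> jump_rate i t z y)"
      using continuous_on_subset[OF continuous_on_jump_rate subs] by simp
  qed blast
  obtain c0 where c0: "c0 > 0" "\<And>k t. t \<in> {0..T} \<Longrightarrow> c0 \<le> (case k of (i, z, y) \<Rightarrow> q i t z y)"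
  proof (rule continuous_on_family_pos_bound[where f="\<lambda>k t. case k of (i, z, y) \<Rightarrow> q i t z y"])
    fix k :: "'i \<times> ('i \<Rightarrow> 'a) \<times> 'a"
    obtain i z y where k: "k = (i, z, y)" by (cases k) auto
    then show "continuous_on {0..T} (\<lambda>t. case k of (i, z, y) \<Rightarrow> q i t z y)"
      using continuous_on_subset[OF q_cont subs] by simp
    fix t assume "t \<in> {0..T}"
    then show "(case k of (i, z, y) \<Rightarrow> q i t z y) > 0" using q_pos subs k by auto
  qed (use T in auto)
  show ?thesis
  proof (rule that[of "max B 0" "min c0 1"])
    fix t i z y assume t: "t \<in> {0..T}"
    show "jump_rate i t z y \<le> max B 0" using B[OF t, of "(i, z, y)"] by simp
    show "min c0 1 \<le> q i t z y" using c0(2)[OF t, of "(i, z, y)"] by simp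
  qed (use c0(1) in auto)
qed

lemma cpath_le_subsol:
  assumes t: "t \<in> {0..<1}" and c: "0 \<le> c" "c \<le> 1"
  shows "c ^ CARD('i) * cpath t x \<le> subsol c t x"
proof -
  have "c ^ CARD('i) * cpath t x = (\<Prod>i\<in>UNIV. c * cpath_i i t (x i))"
    by (simp add: cpath_eq_prod prod.distrib)
  also have "\<dots> \<le> subsol c t x" unfolding subsol_def
  proof (rule prod_mono)
    fix i :: 'i
    have "c * (1 - kappa t (x1 i)) \<le> 1"
      using c kappa_nonneg[OF t, of "x1 i"] kappa_lt1[OF t, of "x1 i"] by (simp add: mult_le_one)
    then have "c * (1 - kappa t (x1 i)) * p (x i) \<le> p (x i)"
      using p_nonneg[of "x i"] mult_right_mono[of "c * (1 - kappa t (x1 i))" 1 "p (x i)"] by simp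
    moreover have "subsol_i c i t (x i) - c * cpath_i i t (x i) = p (x i) - c * (1 - kappa t (x1 i)) * p (x i)"
      by (simp add: subsol_i_def cpath_i_def mix_path_i_def algebra_simps)
    moreover have "0 \<le> c * cpath_i i t (x i)" using cpath_i_nonneg[OF t] c by simp
    ultimately show "0 \<le> c * cpath_i i t (x i) \<and> c * cpath_i i t (x i) \<le> subsol_i c i t (x i)" by linarith
  qed
  finally show ?thesis .
qed

lemma scaled_subsol_subsolution:
  assumes t: "t \<in> {0..<1}" and c: "0 \<le> c" "\<And>i z y. c \<le> q i t z y"
    and K_exit: "(\<Sum>i\<in>UNIV. exit_rate i t x) \<le> K"
  shows "exp (- K * t) * subsol_deriv c t x - K * exp (- K * t) * subsol c t x
    \<le> (\<Sum>i\<in>UNIV. \<Sum>w\<in>UNIV. jump_rate i t (x(i:=w)) (x i) * (exp (- K * t) * subsol c t (x(i:=w))))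
      - (\<Sum>i\<in>UNIV. exit_rate i t x) * (exp (- K * t) * subsol c t x)"
proof -
  have E: "exp (- K * t) > 0" by simp
  have "exp (- K * t) * subsol_deriv c t x
      \<le> exp (- K * t) * (\<Sum>i\<in>UNIV. \<Sum>w\<in>UNIV. jump_rate i t (x(i:=w)) (x i) * subsol c t (x(i:=w)))"
    using subsol_deriv_le[OF t c] E by (simp add: mult_left_mono)
  also have "\<dots> = (\<Sum>i\<in>UNIV. \<Sum>w\<in>UNIV. jump_rate i t (x(i:=w)) (x i) * (exp (- K * t) * subsol c t (x(i:=w))))"
    by (simp add: sum_distrib_left mult_ac)
  finally have inflow: "exp (- K * t) * subsol_deriv c t x
      \<le> (\<Sum>i\<in>UNIV. \<Sum>w\<in>UNIV. jump_rate i t (x(i:=w)) (x i) * (exp (- K * t) * subsol c t (x(i:=w))))" .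
  have "(\<Sum>i\<in>UNIV. exit_rate i t x) * (exp (- K * t) * subsol c t x) \<le> K * (exp (- K * t) * subsol c t x)"
    using K_exit E subsol_nonneg[OF t c(1), of x] by (intro mult_right_mono) auto
  with inflow show ?thesis unfolding mult.assoc by linarith
qed

lemma P_ge_scaled_subsol:
  assumes T: "0 \<le> T" "T < 1" and c: "0 \<le> c" "\<And>t i z y. t \<in> {0..T} \<Longrightarrow> c \<le> q i t z y"
    and K: "\<And>t x. t \<in> {0..T} \<Longrightarrow> (\<Sum>i\<in>UNIV. \<Sum>w\<in>UNIV. jump_rate i t (x(i:=w)) (x i)) \<le> K"
    and K_exit: "\<And>t x. t \<in> {0..T} \<Longrightarrow> (\<Sum>i\<in>UNIV. exit_rate i t x) \<le> K"
    and t: "t \<in> {0..T}"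
  shows "exp (- K * t) * subsol c t x \<le> P t x"
proof -
  have subs: "{0..T} \<subseteq> {0..<1}" using T by auto
  define H where "H t x = exp (- K * t) * subsol c t x" for t x
  define dH where "dH t x = exp (- K * t) * subsol_deriv c t x - K * exp (- K * t) * subsol c t x" for t x
  define A where "A t x j = (case j of (i, w) \<Rightarrow> jump_rate i t (x(i:=w)) (x i))" for t x and j :: "'i \<times> 'a"
  define \<sigma> where "\<sigma> x j = (case j of (i, w) \<Rightarrow> x(i:=w))" for x and j :: "'i \<times> 'a"
  define e where "e t x = (\<Sum>i\<in>UNIV. exit_rate i t x)" for t x
  have "0 \<le> P t x - H t x"
  proof (rule linear_differential_ineq_nonneg[where W="\<lambda>t x. P t x - H t x" and dW="\<lambda>t x. forward_rhs t x - dH t x" and A=A and \<sigma>=\<sigma> and e=e and K=K])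
    fix x t assume t: "t \<in> {0..T}"
    then have t1: "t \<in> {0..<1}" using subs by auto
    have "((\<lambda>s. P s x - H s x) has_real_derivative forward_rhs t x - dH t x) (at t within {0..<1})"
      unfolding H_def dH_def
      by (auto intro!: derivative_eq_intros P_has_deriv[OF t1] subsol_has_deriv[OF t1] simp: algebra_simps)
    then show "((\<lambda>s. P s x - H s x) has_real_derivative forward_rhs t x - dH t x) (at t within {0..T})"
      by (rule DERIV_subset[OF _ subs])
  next
    fix x t assume t: "t \<in> {0..T}"
    then have t1: "t \<in> {0..<1}" using subs by auto
    have "dH t x \<le> (\<Sum>j\<in>UNIV. A t x j * H t (\<sigma> x j)) - e t x * H t x"
      using scaled_subsol_subsolution[OF t1 c(1) c(2)[OF t] K_exit[OF t]]
      unfolding dH_def H_def A_def \<sigma>_def e_def sum_UNIV_pair by simp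
    moreover have "forward_rhs t x = (\<Sum>j\<in>UNIV. A t x j * P t (\<sigma> x j)) - e t x * P t x"
      unfolding forward_rhs_pairs A_def \<sigma>_def e_def by simp
    ultimately show "forward_rhs t x - dH t x
        \<ge> (\<Sum>j\<in>UNIV. A t x j * (P t (\<sigma> x j) - H t (\<sigma> x j))) - e t x * (P t x - H t x)"
      by (simp add: algebra_simps sum_subtractf)
  next
    fix x j t assume "t \<in> {0..T}"
    then show "A t x j \<ge> 0" unfolding A_def using jump_rate_nonneg subs by (auto split: prod.splits)
  next
    fix x t assume "t \<in> {0..T}"
    then show "(\<Sum>j\<in>UNIV. A t x j) \<le> K" unfolding A_def sum_UNIV_pair using K by simp
  next
    fix x t assume "t \<in> {0..T}"
    then show "e t x \<ge> 0" unfolding e_def using subs by (auto intro!: sum_nonneg exit_rate_nonneg)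
  next
    show "0 \<le> P 0 x - H 0 x" for x by (simp add: H_def P_initial subsol_def subsol_i_def kappa0)
  qed (fact t)
  then show ?thesis by (simp add: H_def)
qed

lemma P_ge_cpath:
  assumes T: "0 \<le> T" "T < 1"
  obtains c where "c > 0" "\<And>t x. t \<in> {0..T} \<Longrightarrow> c * cpath t x \<le> P t x"
proof -
  obtain B c where B: "B \<ge> 0" "\<And>t i z y. t \<in> {0..T} \<Longrightarrow> jump_rate i t z y \<le> B"
    and c: "c > 0" "c \<le> 1" "\<And>t i z y. t \<in> {0..T} \<Longrightarrow> c \<le> q i t z y"
    using rates_uniform_bounds[OF T] by metis
  define K where "K = real CARD('i) * (real CARD('a) * B)"
  have K0: "K \<ge> 0" using B(1) by (simp add: K_def)
  have double_sum_le: "(\<Sum>i\<in>UNIV. \<Sum>w\<in>UNIV. f i w) \<le> K"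
    if "\<And>i w. f i w \<le> B" for f :: "'i \<Rightarrow> 'a \<Rightarrow> real"
  proof -
    have "(\<Sum>w\<in>UNIV. f i w) \<le> real CARD('a) * B" for i
      using sum_bounded_above[of UNIV "f i" B] that by simp
    then show ?thesis using sum_bounded_above[of UNIV "\<lambda>i. \<Sum>w\<in>UNIV. f i w"] by (simp add: K_def)
  qed
  have K: "(\<Sum>i\<in>UNIV. \<Sum>w\<in>UNIV. jump_rate i t (x(i:=w)) (x i)) \<le> K"
    and K_exit: "(\<Sum>i\<in>UNIV. exit_rate i t x) \<le> K" if t: "t \<in> {0..T}" for t x
    unfolding exit_rate_def using B(2)[OF t] by (intro double_sum_le; simp)+
  show ?thesis
  proof (rule that)
    show "exp (- K * T) * c ^ CARD('i) > 0" using c by simp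
    fix t x assume t: "t \<in> {0..T}"
    then have t1: "t \<in> {0..<1}" using T by auto
    have "exp (- K * T) \<le> exp (- K * t)" using t K0 by (simp add: mult_left_mono)
    moreover have "0 \<le> c ^ CARD('i) * cpath t x" using c cpath_nonneg[OF t1, of x] by simp
    ultimately have "exp (- K * T) * c ^ CARD('i) * cpath t x \<le> exp (- K * t) * (c ^ CARD('i) * cpath t x)"
      unfolding mult.assoc by (rule mult_right_mono)
    also have "\<dots> \<le> exp (- K * t) * subsol c t x"
      using cpath_le_subsol[OF t1] c by (simp add: mult_left_mono)
    also have "\<dots> \<le> P t x"
      using P_ge_scaled_subsol[OF T _ c(3) K K_exit t] c by simp
    finally show "exp (- K * T) * c ^ CARD('i) * cpath t x \<le> P t x" .
  qed
qed

subsection \<open>The negative KL divergence between the conditional path and the model\<close>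

definition negKL_term where "negKL_term t x = cpath t x * ln (P t x / cpath t x)"
definition negKL where "negKL t = (\<Sum>x\<in>UNIV. negKL_term t x)"
definition negKL_term_deriv where
  "negKL_term_deriv t x = cpath_deriv t x * (ln (P t x / cpath t x) - 1) + cpath t x * forward_rhs t x / P t x"

lemma P_pos_if_cpath_pos: assumes t: "t \<in> {0..<1}" and Q: "cpath t x > 0" shows "P t x > 0"
proof -
  obtain c where "c > 0" "\<And>s x. s \<in> {0..t} \<Longrightarrow> c * cpath s x \<le> P s x"
    using P_ge_cpath[of t] t by auto
  with t Q show ?thesis by (metis atLeastAtMost_iff atLeastLessThan_iff order.refl mult_pos_pos order_less_le_trans)
qed

lemma P_nonneg: assumes t: "t \<in> {0..<1}" shows "P t x \<ge> 0"
proof -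
  obtain c where "c > 0" "\<And>s x. s \<in> {0..t} \<Longrightarrow> c * cpath s x \<le> P s x"
    using P_ge_cpath[of t] t by auto
  with t cpath_nonneg[OF t, of x] show ?thesis
    by (metis atLeastAtMost_iff atLeastLessThan_iff order.refl mult_nonneg_nonneg less_imp_le order_trans)
qed

lemma cpath_eq_0_if_P_eq_0: "t \<in> {0..<1} \<Longrightarrow> P t x = 0 \<Longrightarrow> cpath t x = 0"
  using P_pos_if_cpath_pos[of t x] cpath_nonneg[of t x] by fastforce

text \<open>The only time at which \<open>\<kappa>(y)\<close> can leave \<open>0\<close>; as only the finiteness of the set of
  these times matters, the junk value of \<open>Inf {}\<close> is harmless.\<close>

definition onset where "onset y = Inf {t\<in>{0..<1}. kappa t y > 0}"

lemma kappa_locally_zero: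
  assumes t: "t \<in> {0<..<1}" "t \<noteq> onset y" and k0: "kappa t y = 0"
  obtains \<epsilon> where "\<epsilon> > 0" "\<And>s. dist s t < \<epsilon> \<Longrightarrow> kappa s y = 0"
proof -
  define S where "S = {s\<in>{0..<1}. kappa s y > 0}"
  have zero_below: "kappa s y = 0" if "s \<in> {0..<1}" "s \<notin> S" for s
    using that kappa_nonneg[of s y] by (auto simp: S_def)
  show ?thesis
  proof (cases "S = {}")
    case True
    have "kappa s y = 0" if "dist s t < min t (1 - t)" for s
      using that t True by (intro zero_below) (auto simp: dist_real_def)
    moreover have "min t (1 - t) > 0" using t by auto
    ultimately show ?thesis using that by blast
  next
    case False
    have bdd: "bdd_below S" unfolding S_def by (rule bdd_belowI[of _ 0]) auto
    have "\<not> Inf S < t"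
    proof
      assume "Inf S < t"
      then obtain s where s: "s \<in> S" "s < t" using cInf_less_iff[OF False bdd] by auto
      then have "kappa s y \<le> kappa t y" using t by (intro mono_onD[OF kappa_mono]) (auto simp: S_def)
      then show False using s k0 by (simp add: S_def)
    qed
    moreover have "t \<noteq> Inf S" using t(2) by (simp add: onset_def S_def)
    ultimately have tlt: "t < Inf S" by simp
    obtain b where b: "b \<in> S" using False by auto
    have "Inf S \<le> b" using b bdd by (rule cInf_lower)
    then have "Inf S < 1" using b by (simp add: S_def)
    have "kappa s y = 0" if "dist s t < min t (Inf S - t)" for s
    proof (rule zero_below)
      have s: "0 \<le> s" "s < Inf S" using that t by (auto simp: dist_real_def)
      then show "s \<in> {0..<1}" using \<open>Inf S < 1\<close> by auto
      show "s \<notin> S" using s cInf_lower[OF _ bdd, of s] by auto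
    qed
    moreover have "min t (Inf S - t) > 0" using t tlt by auto
    ultimately show ?thesis using that by blast
  qed
qed

lemma cpath_locally_zero:
  assumes t: "t \<in> {0<..<1}" "t \<notin> range onset" and Q0: "cpath t x = 0"
  obtains \<epsilon> where "\<epsilon> > 0" "\<And>s. dist s t < \<epsilon> \<Longrightarrow> cpath s x = 0"
proof -
  have t1: "t \<in> {0..<1}" using t by auto
  obtain i where "cpath_i i t (x i) = 0" using Q0 unfolding cpath_eq_prod by (auto simp: prod_zero_iff)
  then have sum0: "(1 - kappa t (x1 i)) * p (x i) + kappa t (x1 i) * delta (x1 i) (x i) = 0"
    by (simp add: cpath_i_def mix_path_i_def)
  have nonneg: "(1 - kappa t (x1 i)) * p (x i) \<ge> 0" "kappa t (x1 i) * delta (x1 i) (x i) \<ge> 0"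
    using kappa_lt1[OF t1, of "x1 i"] kappa_nonneg[OF t1, of "x1 i"] p_nonneg[of "x i"]
    by (auto simp: delta_def)
  have p0: "p (x i) = 0" using sum0 nonneg kappa_lt1[OF t1, of "x1 i"] by (simp add: add_nonneg_eq_0_iff)
  have kd0: "kappa t (x1 i) * delta (x1 i) (x i) = 0" using sum0 nonneg by (simp add: add_nonneg_eq_0_iff)
  have Q_zero: "cpath s x = 0" if "kappa s (x1 i) * delta (x1 i) (x i) = 0" for s
    using that p0 by (simp add: cpath_split[of s x i] cpath_i_def mix_path_i_def)
  show ?thesis
  proof (cases "x i = x1 i")
    case False
    then show ?thesis using that[of 1] Q_zero by (simp add: delta_def)
  next
    case True
    then have "kappa t (x1 i) = 0" using kd0 by (simp add: delta_def)
    moreover have "t \<noteq> onset (x1 i)" using t(2) by auto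
    ultimately obtain \<epsilon> where "\<epsilon> > 0" "\<And>s. dist s t < \<epsilon> \<Longrightarrow> kappa s (x1 i) = 0"
      using kappa_locally_zero[OF t(1)] by metis
    then show ?thesis using that Q_zero by simp
  qed
qed

lemma negKL_term_has_deriv:
  assumes t: "t \<in> {0<..<1}" "t \<notin> range onset"
  shows "((\<lambda>s. negKL_term s x) has_real_derivative negKL_term_deriv t x) (at t)"
proof -
  have t1: "t \<in> {0..<1}" using t by auto
  have dQ: "((\<lambda>s. cpath s x) has_real_derivative cpath_deriv t x) (at t)"
    using cpath_has_deriv[OF t1] at_within_Ico_interior[OF t(1)] by simp
  have dP: "((\<lambda>s. P s x) has_real_derivative forward_rhs t x) (at t)"
    using P_has_deriv[OF t1] at_within_Ico_interior[OF t(1)] by simp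
  show ?thesis
  proof (cases "cpath t x = 0")
    case False
    then have Qp: "cpath t x > 0" using cpath_nonneg[OF t1, of x] by simp
    have Pp: "P t x > 0" using P_pos_if_cpath_pos[OF t1 Qp] .
    have "((\<lambda>s. cpath s x * ln (P s x / cpath s x)) has_real_derivative
        cpath_deriv t x * ln (P t x / cpath t x) + cpath t x * ((forward_rhs t x * cpath t x - P t x * cpath_deriv t x)
          / (cpath t x * cpath t x) / (P t x / cpath t x))) (at t)"
      using Qp Pp by (auto intro!: derivative_eq_intros dQ dP)
    moreover have "cpath_deriv t x * ln (P t x / cpath t x) + cpath t x * ((forward_rhs t x * cpath t x - P t x * cpath_deriv t x)
          / (cpath t x * cpath t x) / (P t x / cpath t x)) = negKL_term_deriv t x"
      using Qp Pp unfolding negKL_term_deriv_def by (simp add: field_simps)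
    ultimately show ?thesis unfolding negKL_term_def by simp
  next
    case True
    obtain \<epsilon> where \<epsilon>: "\<epsilon> > 0" "\<And>s. dist s t < \<epsilon> \<Longrightarrow> cpath s x = 0"
      using cpath_locally_zero[OF t True] by blast
    have "((\<lambda>s. cpath s x) has_real_derivative 0) (at t)"
      by (rule has_field_derivative_transform_within_open[OF DERIV_const[of 0 "at t"], of "ball t \<epsilon>"])
         (use \<epsilon> in \<open>auto simp: dist_commute\<close>)
    then have "negKL_term_deriv t x = 0"
      using DERIV_unique[OF dQ] True by (simp add: negKL_term_deriv_def)
    moreover have "((\<lambda>s. negKL_term s x) has_real_derivative 0) (at t)"
      by (rule has_field_derivative_transform_within_open[OF DERIV_const[of 0 "at t"], of "ball t \<epsilon>"])
         (use \<epsilon> in \<open>auto simp: dist_commute negKL_term_def\<close>)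
    ultimately show ?thesis by simp
  qed
qed

lemma negKL_term_lower:
  assumes t: "t \<in> {0..<1}" and c: "c > 0" "c * cpath t x \<le> P t x"
  shows "cpath t x * ln c \<le> negKL_term t x"
proof (cases "cpath t x = 0")
  case False
  then have Qp: "cpath t x > 0" using cpath_nonneg[OF t, of x] by simp
  then have "c \<le> P t x / cpath t x" using c(2) by (simp add: le_divide_eq)
  then have "ln c \<le> ln (P t x / cpath t x)" using c(1) by simp
  then show ?thesis unfolding negKL_term_def using Qp by (intro mult_left_mono) auto
qed (simp add: negKL_term_def)

lemma negKL_term_upper:
  assumes t: "t \<in> {0..<1}" and B: "0 < B" "P t x \<le> B"
  shows "negKL_term t x \<le> cpath t x * ln B - cpath t x * ln (cpath t x)"
proof (cases "cpath t x = 0")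
  case False
  then have Qp: "cpath t x > 0" using cpath_nonneg[OF t, of x] by simp
  have Pp: "P t x > 0" using P_pos_if_cpath_pos[OF t Qp] .
  have "ln (P t x / cpath t x) \<le> ln (B / cpath t x)"
    using B Qp Pp by (simp add: divide_right_mono)
  also have "\<dots> = ln B - ln (cpath t x)" using B Qp by (simp add: ln_div)
  finally have "cpath t x * ln (P t x / cpath t x) \<le> cpath t x * (ln B - ln (cpath t x))"
    using Qp by (intro mult_left_mono) auto
  then show ?thesis by (simp add: negKL_term_def right_diff_distrib)
qed (simp add: negKL_term_def)

text \<open>At a zero of \<open>Q\<^sub>t(x)\<close>, squeeze \<open>Q ln (P/Q)\<close> between
  \<open>Q ln c\<close> and \<open>Q ln B - Q ln Q\<close>, both of which vanish with \<open>Q\<close>.\<close>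

lemma tendsto_negKL_term_at_cpath_zero:
  assumes T: "0 \<le> T" "T < 1" and t: "t \<in> {0..T}" and Q0: "cpath t x = 0"
  shows "((\<lambda>s. negKL_term s x) \<longlongrightarrow> 0) (at t within {0..T})"
proof -
  have subs: "{0..T} \<subseteq> {0..<1}" using T by auto
  have "((\<lambda>s. cpath s x) \<longlongrightarrow> cpath t x) (at t within {0..T})"
    using continuous_on_subset[OF continuous_on_cpath subs] t by (simp add: continuous_on_def)
  then have cQ: "((\<lambda>s. cpath s x) \<longlongrightarrow> 0) (at t within {0..T})" using Q0 by simp
  obtain c where c: "c > 0" "\<And>s x. s \<in> {0..T} \<Longrightarrow> c * cpath s x \<le> P s x"
    using P_ge_cpath[OF T] by blast
  obtain B0 where B0: "\<And>x s. s \<in> {0..T} \<Longrightarrow> \<bar>P s x\<bar> \<le> B0"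
    using continuous_on_family_bounded[of 0 T "\<lambda>x s. P s x"] continuous_on_subset[OF continuous_on_P subs]
    by blast
  define B where "B = max B0 1"
  have B: "B > 0" "\<And>s. s \<in> {0..T} \<Longrightarrow> P s x \<le> B"
    using B0[of _ x] by (fastforce simp: B_def abs_le_iff)+
  have within: "eventually (\<lambda>s. s \<in> {0..T}) (at t within {0..T})" by (simp add: eventually_at_filter)
  then have "\<forall>\<^sub>F s in at t within {0..T}. cpath s x \<in> {0..}"
    by eventually_elim (use subs in \<open>auto intro: cpath_nonneg\<close>)
  then have "((\<lambda>s. cpath s x * ln (cpath s x)) \<longlongrightarrow> 0) (at t within {0..T})"
    using continuous_on_tendsto_compose[OF continuous_on_x_ln_x cQ] by simp
  then have upper: "((\<lambda>s. cpath s x * ln B - cpath s x * ln (cpath s x)) \<longlongrightarrow> 0) (at t within {0..T})"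
    using tendsto_diff[OF tendsto_mult[OF cQ tendsto_const[of "ln B"]]] by fastforce
  have lower: "((\<lambda>s. cpath s x * ln c) \<longlongrightarrow> 0) (at t within {0..T})"
    using tendsto_mult[OF cQ tendsto_const[of "ln c"]] by simp
  show ?thesis
  proof (rule tendsto_sandwich[OF _ _ lower upper])
    show "\<forall>\<^sub>F s in at t within {0..T}. cpath s x * ln c \<le> negKL_term s x"
      and "\<forall>\<^sub>F s in at t within {0..T}. negKL_term s x \<le> cpath s x * ln B - cpath s x * ln (cpath s x)"
      using within by (eventually_elim, use subs c B in \<open>auto intro!: negKL_term_lower negKL_term_upper\<close>)+
  qed
qed

lemma continuous_on_negKL_term:
  assumes T: "0 \<le> T" "T < 1"
  shows "continuous_on {0..T} (\<lambda>s. negKL_term s x)"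
  unfolding continuous_on_eq_continuous_within
proof
  fix t assume t: "t \<in> {0..T}"
  have subs: "{0..T} \<subseteq> {0..<1}" using T by auto
  have t1: "t \<in> {0..<1}" using t subs by auto
  show "continuous (at t within {0..T}) (\<lambda>s. negKL_term s x)"
  proof (cases "cpath t x = 0")
    case False
    then have Qp: "cpath t x > 0" using cpath_nonneg[OF t1, of x] by simp
    have "((\<lambda>s. cpath s x * ln (P s x / cpath s x)) \<longlongrightarrow> cpath t x * ln (P t x / cpath t x)) (at t within {0..T})"
      using continuous_on_subset[OF continuous_on_P subs] continuous_on_subset[OF continuous_on_cpath subs] t
        Qp P_pos_if_cpath_pos[OF t1 Qp]
      by (intro tendsto_intros) (auto simp: continuous_on_def)
    then show ?thesis by (simp add: continuous_within negKL_term_def)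
  next
    case True
    then show ?thesis
      using tendsto_negKL_term_at_cpath_zero[OF T t] by (simp add: continuous_within negKL_term_def)
  qed
qed

subsection \<open>The derivative of the negative KL divergence\<close>

lemma sum_delta_cpath_others:
  "(\<Sum>x\<in>UNIV. delta (x1 i) (x i) * cpath_others i t x * f x) = (\<Sum>z\<in>UNIV. cpath t z * f (z(i:=x1 i)))"
proof -
  have "(\<Sum>z\<in>UNIV. cpath t z * f (z(i:=x1 i)))
      = (\<Sum>x\<in>{x. x i = x1 i}. \<Sum>w\<in>UNIV. cpath t (x(i:=w)) * f (x(i:=w, i:=x1 i)))"
    by (rule sum_fiber_fun_upd)
  also have "\<dots> = (\<Sum>x\<in>{x. x i = x1 i}. cpath_others i t x * f x)"
  proof (rule sum.cong[OF refl])
    fix x assume "x \<in> {x. x i = x1 i}"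
    then have "x(i := x1 i) = x" by auto
    then show "(\<Sum>w\<in>UNIV. cpath t (x(i:=w)) * f (x(i:=w, i:=x1 i))) = cpath_others i t x * f x"
      by (simp add: sum_distrib_right[symmetric] sum_cpath_fun_upd)
  qed
  also have "\<dots> = (\<Sum>x\<in>UNIV. if x i = x1 i then cpath_others i t x * f x else 0)"
    by (rule sum.inter_filter[where A=UNIV, simplified]) simp
  also have "\<dots> = (\<Sum>x\<in>UNIV. delta (x1 i) (x i) * cpath_others i t x * f x)"
    by (intro sum.cong) (auto simp: delta_def)
  finally show ?thesis by simp
qed

lemma sum_cpath_deriv_mult: assumes t: "t \<in> {0..<1}"
  shows "(\<Sum>x\<in>UNIV. cpath_deriv t x * h x)
       = (\<Sum>i\<in>UNIV. lam t (x1 i) * (\<Sum>z\<in>UNIV. cpath t z * (h (z(i:=x1 i)) - h z)))"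
proof -
  have "(\<Sum>x\<in>UNIV. cpath_deriv t x * h x) = (\<Sum>x\<in>UNIV. \<Sum>i\<in>UNIV.
      lam t (x1 i) * (delta (x1 i) (x i) * cpath_others i t x * h x - cpath t x * h x))"
    unfolding cpath_deriv_eq[OF t] sum_distrib_right by (simp add: algebra_simps)
  also have "\<dots> = (\<Sum>i\<in>UNIV. lam t (x1 i) * ((\<Sum>x\<in>UNIV. delta (x1 i) (x i) * cpath_others i t x * h x)
      - (\<Sum>x\<in>UNIV. cpath t x * h x)))"
    by (subst sum.swap) (intro sum.cong refl, simp add: sum_distrib_left[symmetric] sum_subtractf)
  also have "\<dots> = (\<Sum>i\<in>UNIV. lam t (x1 i) * (\<Sum>z\<in>UNIV. cpath t z * (h (z(i:=x1 i)) - h z)))"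
    unfolding sum_delta_cpath_others by (simp add: sum_subtractf algebra_simps)
  finally show ?thesis .
qed

text \<open>The model's jump rate from \<open>z\<close> to \<open>z(i:=y)\<close>, weighted by \<open>P\<^sub>t(z)\<close> and by \<open>Q/P\<close>
  at the target.\<close>

definition tilted_rate where
  "tilted_rate i t z y = jump_rate i t z y * P t z * (cpath t (z(i:=y)) / P t (z(i:=y)))"

lemma sum_cpath_forward_rhs_div_P: assumes t: "t \<in> {0..<1}"
  shows "(\<Sum>x\<in>UNIV. cpath t x * forward_rhs t x / P t x)
       = (\<Sum>i\<in>UNIV. \<Sum>z\<in>UNIV. (\<Sum>y\<in>UNIV. tilted_rate i t z y) - cpath t z * exit_rate i t z)"
proof -
  have "cpath t x * forward_rhs t x / P t x = (\<Sum>i\<in>UNIV. (cpath t x / P t x)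
      * (\<Sum>w\<in>UNIV. jump_rate i t (x(i:=w)) (x i) * P t (x(i:=w))) - cpath t x * exit_rate i t x)" for x
  proof (cases "P t x = 0")
    case True
    then show ?thesis using cpath_eq_0_if_P_eq_0[OF t] by simp
  next
    case False
    have "cpath t x * forward_rhs t x / P t x = (cpath t x / P t x) * forward_rhs t x" by simp
    also have "\<dots> = (\<Sum>i\<in>UNIV. (cpath t x / P t x) * (\<Sum>w\<in>UNIV. jump_rate i t (x(i:=w)) (x i) * P t (x(i:=w)))
        - (cpath t x / P t x) * (exit_rate i t x * P t x))"
      unfolding forward_rhs_def by (simp add: sum_distrib_left right_diff_distrib)
    also have "\<dots> = (\<Sum>i\<in>UNIV. (cpath t x / P t x) * (\<Sum>w\<in>UNIV. jump_rate i t (x(i:=w)) (x i) * P t (x(i:=w)))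
        - cpath t x * exit_rate i t x)"
      using False by (intro sum.cong refl) simp
    finally show ?thesis .
  qed
  then have "(\<Sum>x\<in>UNIV. cpath t x * forward_rhs t x / P t x)
      = (\<Sum>x\<in>UNIV. \<Sum>i\<in>UNIV. (cpath t x / P t x) * (\<Sum>w\<in>UNIV. jump_rate i t (x(i:=w)) (x i) * P t (x(i:=w)))
        - cpath t x * exit_rate i t x)"
    by simp
  also have "\<dots> = (\<Sum>i\<in>UNIV. (\<Sum>x\<in>UNIV. \<Sum>w\<in>UNIV. tilted_rate i t (x(i:=w)) (x i))
      - (\<Sum>z\<in>UNIV. cpath t z * exit_rate i t z))"
    by (subst sum.swap) (simp add: sum_subtractf sum_distrib_left tilted_rate_def mult_ac)
  also have "\<dots> = (\<Sum>i\<in>UNIV. \<Sum>z\<in>UNIV. (\<Sum>y\<in>UNIV. tilted_rate i t z y) - cpath t z * exit_rate i t z)"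
    by (simp add: sum_fun_upd_swap sum_subtractf)
  finally show ?thesis .
qed

lemma tilted_rate_nonneg: "t \<in> {0..<1} \<Longrightarrow> tilted_rate i t z y \<ge> 0"
  unfolding tilted_rate_def using jump_rate_nonneg[of t i z y] P_nonneg[of t] cpath_nonneg[of t]
  by (intro mult_nonneg_nonneg divide_nonneg_nonneg) auto

lemma tilted_rate_self: assumes t: "t \<in> {0..<1}"
  shows "tilted_rate i t z (z i) = jump_rate i t z (z i) * cpath t z"
  using cpath_eq_0_if_P_eq_0[OF t, of z] by (cases "P t z = 0") (simp_all add: tilted_rate_def)

text \<open>With \<open>L = ln (P/Q)\<close> and \<open>a = ln q(x\<^sub>1\<^sup>i | z) - (L(z(i:=x\<^sub>1\<^sup>i)) - L(z))\<close>, the tilted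
  rate equals \<open>\<lambda> Q(z) exp a \<ge> \<lambda> Q(z) (1 + a)\<close>. The logarithms are finite: if
  \<open>\<lambda>\<^sub>t(x\<^sub>1\<^sup>i) > 0\<close> then \<open>\<kappa>\<^sub>t(x\<^sub>1\<^sup>i) > 0\<close>, so \<open>Q(z) > 0\<close> forces \<open>Q(z(i:=x\<^sub>1\<^sup>i)) > 0\<close>.\<close>

lemma tilted_rate_lower:
  assumes t: "t \<in> {0<..<1}"
  shows "lam t (x1 i) * (cpath t z * (ln (P t (z(i:=x1 i)) / cpath t (z(i:=x1 i))) - ln (P t z / cpath t z)))
      + tilted_rate i t z (x1 i)
    \<ge> cpath t z * (lam t (x1 i) * (1 + ln (q i t z (x1 i))))"
proof -
  have t1: "t \<in> {0..<1}" using t by auto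
  define z' where "z' = z(i:=x1 i)"
  define l where "l = lam t (x1 i)"
  define qq where "qq = q i t z (x1 i)"
  have qq: "qq > 0" unfolding qq_def by (rule q_pos[OF t1])
  show ?thesis
  proof (cases "cpath t z = 0 \<or> l = 0")
    case True
    then show ?thesis using tilted_rate_nonneg[OF t1] by (auto simp: l_def)
  next
    case False
    then have Qz: "cpath t z > 0" and lp: "l > 0"
      using cpath_nonneg[OF t1, of z] lam_nonneg[OF t1, of "x1 i"] by (auto simp: l_def)
    have Pz: "P t z > 0" using P_pos_if_cpath_pos[OF t1 Qz] .
    have "dkappa t (x1 i) \<noteq> 0" using lp by (auto simp: l_def sched_rate_def)
    then have "kappa t (x1 i) > 0"
      using dkappa_eq_0_if_kappa_eq_0[OF t, of "x1 i"] kappa_nonneg[OF t1, of "x1 i"] by force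
    moreover have "cpath_i i t (x1 i) \<ge> kappa t (x1 i)"
      using p_nonneg[of "x1 i"] kappa_lt1[OF t1, of "x1 i"] by (simp add: cpath_i_def mix_path_i_def delta_def)
    moreover have "cpath_others i t z > 0"
      using Qz cpath_split[of t z i] cpath_others_nonneg[OF t1, of i z] by (metis less_eq_real_def mult_zero_right)
    ultimately have Qz': "cpath t z' > 0"
      unfolding z'_def using cpath_split[of t "z(i:=x1 i)" i] cpath_others_fun_upd by simp
    have Pz': "P t z' > 0" using P_pos_if_cpath_pos[OF t1 Qz'] .
    define a where "a = ln qq - (ln (P t z' / cpath t z') - ln (P t z / cpath t z))"
    have "exp a = qq * (P t z / cpath t z) / (P t z' / cpath t z')"
      unfolding a_def using qq Qz Pz Qz' Pz' by (simp add: exp_diff mult_ac)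
    then have tilted: "tilted_rate i t z (x1 i) = l * cpath t z * exp a"
      unfolding tilted_rate_def jump_rate_def l_def qq_def z'_def using Qz Pz Qz' Pz' unfolding z'_def
      by (simp add: field_simps)
    have "l * cpath t z * (1 + a) \<le> l * cpath t z * exp a"
      using lp Qz exp_ge_add_one_self[of a] by (intro mult_left_mono) auto
    then show ?thesis unfolding tilted z'_def[symmetric] l_def[symmetric] qq_def[symmetric] a_def
      by (simp add: algebra_simps)
  qed
qed

lemma coordinate_term_ge:
  assumes t: "t \<in> {0<..<1}"
  shows "lam t (x1 i) * (cpath t z * (ln (P t (z(i:=x1 i)) / cpath t (z(i:=x1 i))) - ln (P t z / cpath t z)))
      + ((\<Sum>y\<in>UNIV. tilted_rate i t z y) - cpath t z * exit_rate i t z)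
    \<ge> cpath t z * (lam t (z i) * q i t z (z i) - (\<Sum>y\<in>UNIV. lam t y * q i t z y)
        + (1 - delta (x1 i) (z i)) * lam t (x1 i) * (1 + ln (q i t z (x1 i))))"
proof -
  have t1: "t \<in> {0..<1}" using t by auto
  have exit: "exit_rate i t z = (\<Sum>y\<in>UNIV. lam t y * q i t z y)" by (simp add: exit_rate_def jump_rate_def)
  show ?thesis
  proof (cases "z i = x1 i")
    case True
    then have "z(i:=x1 i) = z" by auto
    moreover have "(\<Sum>y\<in>UNIV. tilted_rate i t z y) \<ge> tilted_rate i t z (z i)"
      using tilted_rate_nonneg[OF t1] by (intro member_le_sum) auto
    ultimately show ?thesis using True tilted_rate_self[OF t1, of i z]
      by (simp add: delta_def exit jump_rate_def algebra_simps)
  next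
    case False
    have "(\<Sum>y\<in>{z i, x1 i}. tilted_rate i t z y) \<le> (\<Sum>y\<in>UNIV. tilted_rate i t z y)"
      using tilted_rate_nonneg[OF t1] by (intro sum_mono2) auto
    then have "tilted_rate i t z (z i) + tilted_rate i t z (x1 i) \<le> (\<Sum>y\<in>UNIV. tilted_rate i t z y)"
      using False by simp
    then show ?thesis using tilted_rate_lower[OF t, where i=i and z=z] False tilted_rate_self[OF t1, of i z]
      by (simp add: delta_def exit jump_rate_def algebra_simps)
  qed
qed

lemma elbo_integrand_eq: "elbo t =
  (\<Sum>z\<in>UNIV. cpath t z * (\<Sum>i\<in>UNIV. lam t (z i) * q i t z (z i) - (\<Sum>y\<in>UNIV. lam t y * q i t z y)
        + (1 - delta (x1 i) (z i)) * lam t (x1 i) * (1 + ln (q i t z (x1 i)))))"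
  unfolding elbo_integrand_def Let_def cpath_def ..

lemma elbo_le_sum_negKL_term_deriv: assumes t: "t \<in> {0<..<1}"
  shows "elbo t \<le> (\<Sum>x\<in>UNIV. negKL_term_deriv t x)"
proof -
  have t1: "t \<in> {0..<1}" using t by auto
  define L where "L x = ln (P t x / cpath t x)" for x
  have "elbo t = (\<Sum>i\<in>UNIV. \<Sum>z\<in>UNIV. cpath t z * (lam t (z i) * q i t z (z i) - (\<Sum>y\<in>UNIV. lam t y * q i t z y)
        + (1 - delta (x1 i) (z i)) * lam t (x1 i) * (1 + ln (q i t z (x1 i)))))"
    unfolding elbo_integrand_eq by (subst sum.swap) (simp add: sum_distrib_left)
  also have "\<dots> \<le> (\<Sum>i\<in>UNIV. \<Sum>z\<in>UNIV. lam t (x1 i) * (cpath t z * (L (z(i:=x1 i)) - L z))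
      + ((\<Sum>y\<in>UNIV. tilted_rate i t z y) - cpath t z * exit_rate i t z))"
    unfolding L_def by (intro sum_mono coordinate_term_ge[OF t])
  also have "\<dots> = (\<Sum>x\<in>UNIV. cpath_deriv t x * (L x - 1)) + (\<Sum>x\<in>UNIV. cpath t x * forward_rhs t x / P t x)"
    unfolding sum_cpath_forward_rhs_div_P[OF t1] sum_cpath_deriv_mult[OF t1]
    by (simp add: sum_distrib_left sum.distrib)
  also have "\<dots> = (\<Sum>x\<in>UNIV. negKL_term_deriv t x)"
    by (simp add: negKL_term_deriv_def L_def sum.distrib)
  finally show ?thesis .
qed

subsection \<open>Integration and the limit \<open>t \<rightarrow> 1\<close>\<close>

lemma negKL_0: "negKL 0 = 0"
proof -
  have "cpath 0 x = P 0 x" for x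
    by (simp add: cpath_eq_prod P_initial cpath_i_def mix_path_i_def kappa0)
  then show ?thesis unfolding negKL_def negKL_term_def
    by (intro sum.neutral ballI) (simp add: divide_self_if)
qed

text \<open>The fundamental theorem of calculus may skip the finitely many onsets of \<open>\<kappa>\<close>,
  where the derivative of \<open>negKL\<close> need not exist.\<close>

lemma integral_le_negKL:
  assumes T: "0 < T" "T < 1" and integrable: "elbo integrable_on {0..T}"
  shows "integral {0..T} elbo \<le> negKL T"
proof -
  define f where "f t = (if t \<in> range onset \<or> t = 0 then elbo t else (\<Sum>x\<in>UNIV. negKL_term_deriv t x))" for t
  have "(f has_integral (negKL T - negKL 0)) {0..T}"
  proof (rule fundamental_theorem_of_calculus_interior_strong[of "range onset"])
    fix t assume t: "t \<in> {0<..<T} - range onset"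
    then have t1: "t \<in> {0<..<1}" "t \<notin> range onset" using T by auto
    have "(negKL has_real_derivative (\<Sum>x\<in>UNIV. negKL_term_deriv t x)) (at t)"
      unfolding negKL_def[abs_def] by (intro DERIV_sum negKL_term_has_deriv[OF t1])
    then show "(negKL has_vector_derivative f t) (at t)"
      using t1 by (simp add: f_def has_real_derivative_iff_has_vector_derivative)
  next
    show "continuous_on {0..T} negKL"
      unfolding negKL_def[abs_def] using T by (intro continuous_on_sum continuous_on_negKL_term) auto
  qed (use T in auto)
  then have "(f has_integral negKL T) {0..T}" by (simp add: negKL_0)
  moreover have "elbo t \<le> f t" if "t \<in> {0..T}" for t
    using that T elbo_le_sum_negKL_term_deriv[of t] by (auto simp: f_def)
  ultimately show ?thesis using has_integral_le[OF integrable_integral[OF integrable]] by blast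
qed

lemma eventually_in_unit: "eventually (\<lambda>t. t \<in> {0<..<1}) (at_left (1::real))"
  using eventually_at_left_real[of 0 "1::real"] by simp

lemma eventually_integral_le_negKL:
  assumes integrable: "elbo integrable_on {0..1}"
  shows "eventually (\<lambda>t. integral {0..t} elbo \<le> negKL t) (at_left 1)"
  using eventually_in_unit
proof eventually_elim
  case (elim t)
  then show ?case by (intro integral_le_negKL integrable_on_subinterval[OF integrable]) auto
qed

lemma tendsto_cpath_mult_ln_cpath: "((\<lambda>t. cpath t x * ln (cpath t x)) \<longlongrightarrow> 0) (at_left 1)"
proof -
  have "\<forall>\<^sub>F t in at_left 1. cpath t x \<in> {0..}"
    using eventually_in_unit by eventually_elim (simp add: cpath_nonneg)
  then have "((\<lambda>t. cpath t x * ln (cpath t x)) \<longlongrightarrow> (\<lambda>u. u * ln u) (if x = x1 then 1 else 0)) (at_left 1)"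
    by (intro continuous_on_tendsto_compose[OF continuous_on_x_ln_x cpath_tendsto]) simp_all
  then show ?thesis by (simp split: if_splits)
qed

lemma P1_nonneg: "P 1 x \<ge> 0"
proof (rule tendsto_lowerbound[OF P_tendsto_P1])
  show "eventually (\<lambda>t. P t x \<ge> 0) (at_left 1)"
    using eventually_in_unit by eventually_elim (simp add: P_nonneg)
qed simp

text \<open>Near \<open>t = 1\<close> all mass of \<open>Q\<^sub>t\<close> is at \<open>x\<^sub>1\<close>, and the terms of the other states are
  bounded above by \<open>Q ln B - Q ln Q \<rightarrow> 0\<close> for a bound \<open>B\<close> on \<open>P\<close>.\<close>

lemma negKL_eventually_le:
  obtains E where "(E \<longlongrightarrow> 0) (at_left 1)"
    "eventually (\<lambda>t. negKL t \<le> cpath t x1 * ln (P t x1) + E t) (at_left 1)"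
proof -
  define B where "B = (\<Sum>x\<in>UNIV. \<bar>P 1 x\<bar>) + 1"
  have B: "B > 0" unfolding B_def by (simp add: add_nonneg_pos sum_nonneg)
  have evB: "eventually (\<lambda>t. \<forall>x. P t x \<le> B) (at_left 1)"
  proof (rule eventually_all_finite)
    fix x
    have "P 1 x < B" unfolding B_def using member_le_sum[of x UNIV "\<lambda>x. \<bar>P 1 x\<bar>"] by simp
    from order_tendstoD(2)[OF P_tendsto_P1 this] show "eventually (\<lambda>t. P t x \<le> B) (at_left 1)"
      by (rule eventually_mono) simp
  qed
  have evQ: "eventually (\<lambda>t. cpath t x1 > 0) (at_left 1)"
    using order_tendstoD(1)[OF cpath_tendsto[of x1], of 0] by simp
  define E where "E t = - cpath t x1 * ln (cpath t x1)
      + (\<Sum>x\<in>UNIV - {x1}. cpath t x * ln B - cpath t x * ln (cpath t x))" for t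
  show ?thesis
  proof (rule that)
    have "((\<lambda>t. cpath t x * ln B - cpath t x * ln (cpath t x)) \<longlongrightarrow> 0) (at_left 1)"
      if "x \<in> UNIV - {x1}" for x
      using that tendsto_diff[OF tendsto_mult[OF cpath_tendsto[of x] tendsto_const[of "ln B"]]
          tendsto_cpath_mult_ln_cpath[of x]] by simp
    then have "((\<lambda>t. \<Sum>x\<in>UNIV - {x1}. cpath t x * ln B - cpath t x * ln (cpath t x))
        \<longlongrightarrow> (\<Sum>x\<in>UNIV - {x1}. 0)) (at_left 1)"
      by (rule tendsto_sum)
    then show "(E \<longlongrightarrow> 0) (at_left 1)"
      unfolding E_def using tendsto_add[OF tendsto_minus[OF tendsto_cpath_mult_ln_cpath[of x1]]] by simp
    show "eventually (\<lambda>t. negKL t \<le> cpath t x1 * ln (P t x1) + E t) (at_left 1)"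
      using eventually_in_unit evB evQ
    proof eventually_elim
      case (elim t)
      then have t1: "t \<in> {0..<1}" by auto
      have "P t x1 > 0" using P_pos_if_cpath_pos[OF t1 elim(3)] .
      then have "negKL_term t x1 = cpath t x1 * ln (P t x1) - cpath t x1 * ln (cpath t x1)"
        using elim(3) by (simp add: negKL_term_def ln_div right_diff_distrib)
      moreover have "(\<Sum>x\<in>UNIV - {x1}. negKL_term t x)
          \<le> (\<Sum>x\<in>UNIV - {x1}. cpath t x * ln B - cpath t x * ln (cpath t x))"
        using elim(2) B by (intro sum_mono negKL_term_upper[OF t1]) auto
      moreover have "negKL t = negKL_term t x1 + (\<Sum>x\<in>UNIV - {x1}. negKL_term t x)"
        unfolding negKL_def by (simp add: sum.remove)
      ultimately show ?case by (simp add: E_def)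
    qed
  qed
qed

lemma P1_x1_pos:
  assumes integrable: "elbo integrable_on {0..1}"
  shows "P 1 x1 > 0"
proof (rule ccontr)
  assume "\<not> P 1 x1 > 0"
  then have "P 1 x1 = 0" using P1_nonneg[of x1] by simp
  moreover have "eventually (\<lambda>t. cpath t x1 > 0) (at_left 1)"
    using order_tendstoD(1)[OF cpath_tendsto[of x1], of 0] by simp
  then have "eventually (\<lambda>t. P t x1 > 0) (at_left 1)"
    using eventually_in_unit by eventually_elim (auto intro: P_pos_if_cpath_pos)
  ultimately have "filterlim (\<lambda>t. P t x1) (at_right 0) (at_left 1)"
    using P_tendsto_P1[of x1] by (auto simp: filterlim_at elim: eventually_mono)
  then have "filterlim (\<lambda>t. cpath t x1 * ln (P t x1)) at_bot (at_left 1)"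
    using cpath_tendsto[of x1]
    by (intro filterlim_tendsto_pos_mult_at_bot[OF _ _ filterlim_compose[OF ln_at_0]]) auto
  moreover obtain E where E: "(E \<longlongrightarrow> 0) (at_left 1)"
    "eventually (\<lambda>t. negKL t \<le> cpath t x1 * ln (P t x1) + E t) (at_left 1)"
    using negKL_eventually_le by blast
  ultimately have "filterlim (\<lambda>t. E t + cpath t x1 * ln (P t x1)) at_bot (at_left 1)"
    by (subst filterlim_tendsto_add_at_bot_iff[OF E(1)])
  then have "eventually (\<lambda>t. E t + cpath t x1 * ln (P t x1) < integral {0..1} elbo - 1) (at_left 1)"
    unfolding filterlim_at_bot_dense by blast
  moreover have "eventually (\<lambda>t. integral {0..t} elbo > integral {0..1} elbo - 1) (at_left 1)"
    using order_tendstoD(1)[OF tendsto_integral_upto_at_left[OF integrable]] by simp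
  moreover note eventually_integral_le_negKL[OF integrable]
  ultimately have "eventually (\<lambda>t. False) (at_left (1::real))"
    using E(2) by eventually_elim auto
  then show False by (simp add: trivial_limit_at_left_real)
qed

lemma integral_elbo_le_ln_P1:
  assumes integrable: "elbo integrable_on {0..1}"
  shows "integral {0..1} elbo \<le> ln (P 1 x1)"
proof -
  obtain E where E: "(E \<longlongrightarrow> 0) (at_left 1)"
    "eventually (\<lambda>t. negKL t \<le> cpath t x1 * ln (P t x1) + E t) (at_left 1)"
    using negKL_eventually_le by blast
  have "((\<lambda>t. cpath t x1 * ln (P t x1) + E t) \<longlongrightarrow> 1 * ln (P 1 x1) + 0) (at_left 1)"
    using cpath_tendsto[of x1] P1_x1_pos[OF integrable]
    by (intro tendsto_intros E(1) P_tendsto_P1) auto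
  moreover have "eventually (\<lambda>t. integral {0..t} elbo \<le> cpath t x1 * ln (P t x1) + E t) (at_left 1)"
    using eventually_integral_le_negKL[OF integrable] E(2) by eventually_elim linarith
  ultimately show ?thesis
    using tendsto_le[OF _ _ tendsto_integral_upto_at_left[OF integrable]] by (simp add: trivial_limit_at_left_real)
qed

end

theorem mainTheorem11:
  fixes p :: "'a::finite \<Rightarrow> real"
    and kappa dkappa :: "real \<Rightarrow> 'a \<Rightarrow> real"
    and q :: "'i::finite \<Rightarrow> real \<Rightarrow> ('i \<Rightarrow> 'a) \<Rightarrow> 'a \<Rightarrow> real"
    and P :: "real \<Rightarrow> ('i \<Rightarrow> 'a) \<Rightarrow> real"
    and x1 :: "'i \<Rightarrow> 'a"
  assumes p_nonneg: "\<And>y. p y \<ge> 0"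
    and p_sum: "(\<Sum>y\<in>UNIV. p y) = 1"
    and kappa0: "\<And>y. kappa 0 y = 0"
    and kappa_lim: "\<And>y. ((\<lambda>t. kappa t y) \<longlongrightarrow> 1) (at_left 1)"
    and kappa_mono: "\<And>y. mono_on {0..<1} (\<lambda>t. kappa t y)"
    and kappa_lt1: "\<And>y t. t \<in> {0..<1} \<Longrightarrow> kappa t y < 1"
    and kappa_deriv: "\<And>y t. t \<in> {0..<1} \<Longrightarrow>
           ((\<lambda>s. kappa s y) has_real_derivative dkappa t y) (at t within {0..<1})"
    and dkappa_cont: "\<And>y. continuous_on {0..<1} (\<lambda>t. dkappa t y)"
    and q_pos: "\<And>i t z y. t \<in> {0..<1} \<Longrightarrow> q i t z y > 0"
    and q_sum: "\<And>i t z. t \<in> {0..<1} \<Longrightarrow> (\<Sum>y\<in>UNIV. q i t z y) = 1"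
    and q_cont: "\<And>i z y. continuous_on {0..<1} (\<lambda>t. q i t z y)"
    and P_ctmc: "ctmc_marginal
                   (fact_vel (model_vel_i (sched_rate kappa dkappa) q))
                   (\<lambda>x. \<Prod>i\<in>UNIV. p (x i)) P"
    and integrable: "set_integrable lborel {0..1::real} (elbo_integrand p kappa dkappa q x1)"
  shows "P 1 x1 > 0 \<and>
         ln (P 1 x1) \<ge> (LINT t:{0..1}|lborel. elbo_integrand p kappa dkappa q x1 t)"
proof -
  interpret elbo_setting p kappa dkappa q P x1
    by unfold_locales (fact p_nonneg p_sum kappa0 kappa_lim kappa_mono kappa_lt1 kappa_deriv
        dkappa_cont q_pos q_cont P_ctmc)+
  have "elbo integrable_on {0..1}" and "(LINT t:{0..1}|lborel. elbo t) = integral {0..1} elbo"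
    using set_borel_integral_eq_integral[OF integrable] by auto
  then show ?thesis using P1_x1_pos integral_elbo_le_ln_P1 by simp
qed

end
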